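(* Let $p\ge0$, let $m_1,\dots,m_p$ be non-negative integers, and let $a,b,d,c_1,\dots,c_p$ be complex parameters such that no denominators below vanish and $|dq^{-|m|}/ab|<1$. Then \begin{multline*}\sum_{y=0}^\infty \frac{(a,b)_y}{(q,d)_y} \prod_{i=1}^p\frac{(c_iq^{m_i})_{y}}{(c_i)_{y}} \left(\frac{dq^{-|m|}}{ab}\right)^{y}=\frac{(d/a,d/b)_\infty} {(d,q^{-|m|}d/ab)_\infty} \prod_{i=1}^p(q^{-m_i}d/c_i)_{m_i}\\ \times\sum_{x_1,\dots,x_p=0}^{m_1,\dots,m_p} \frac{\Delta(cq^x)}{\Delta(c)}\,q^{|x|} \prod_{i=1}^p\frac{(c_i/a,c_i/b)_{x_i}} {(c_i,qc_i/d)_{x_i}}\prod_{i,k=1}^p\frac{(q^{-m_k}c_i/c_k)_{x_i}} {(qc_i/c_k)_{x_i}}. \end{multline*}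
   Context: $q$ is a fixed complex number with $0<|q|<1$. For $k\ge 0$, $(a)_k=(1-a)(1-aq)\cdots(1-aq^{k-1})$, and for $k<0$, $(a)_k=1/\big((1-aq^{-1})\cdots(1-aq^{k})\big)$; $(a)_\infty=\prod_{j\ge0}(1-aq^j)$; $(a_1,\dots,a_r)_k=(a_1)_k\cdots(a_r)_k$ (also for $k=\infty$). $|m|=m_1+\dots+m_p$, $|x|=x_1+\dots+x_p$. $\frac{\Delta(cq^x)}{\Delta(c)}=\prod_{1\le i<j\le p}\frac{c_iq^{x_i}-c_jq^{x_j}}{c_i-c_j}$. The sum $\sum_{x_1,\dots,x_p=0}^{m_1,\dots,m_p}$ runs over integers $0\le x_i\le m_i$. *)

theory Defs
  imports "HOL-Analysis.Analysis"
begin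

definition qpoch :: "complex \<Rightarrow> complex \<Rightarrow> nat \<Rightarrow> complex" where
  "qpoch q a k = (\<Prod>j<k. 1 - a * q ^ j)"

definition qpoch_inf :: "complex \<Rightarrow> complex \<Rightarrow> complex" where
  "qpoch_inf q a = lim (\<lambda>n. \<Prod>j<n. 1 - a * q ^ j)"

text \<open>Vandermonde quotient Delta(c q^x)/Delta(c), indices 0..p-1.\<close>
definition vdm_quot :: "complex \<Rightarrow> nat \<Rightarrow> (nat \<Rightarrow> complex) \<Rightarrow> (nat \<Rightarrow> nat) \<Rightarrow> complex" where
  "vdm_quot q p c x = (\<Prod>j<p. \<Prod>i<j. (c i * q ^ x i - c j * q ^ x j) / (c i - c j))"

end

theory Submission
  imports Defs "HOL-Computational_Algebra.Polynomial"
begin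

text \<open>Write \<open>M = |m|\<close>. For each \<open>i\<close>, \<open>(c\<^sub>i q^m\<^sub>i)\<^sub>y / (c\<^sub>i)\<^sub>y = q^(m\<^sub>i y) G\<^sub>i(q^-y)\<close> with a polynomial
  \<open>G\<^sub>i\<close> of degree \<open>m\<^sub>i\<close>. Expanding \<open>G = \<Prod>\<^sub>i G\<^sub>i\<close> in the basis \<open>(w; q)\<^sub>k\<close> turns the series into a finite
  combination of q-Gauss sums (the factor \<open>(q^-y)\<^sub>k\<close> kills the first \<open>k\<close> terms of the \<open>k\<close>-th one),
  and Heine's summation yields the right-hand side with a finite single sum \<open>F(a)\<close> in place of
  the multiple sum \<open>R(a)\<close>.

  Both \<open>F\<close> and \<open>R\<close> are polynomials of degree at most \<open>M\<close> in \<open>1/a\<close> with the same leading coefficient,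
  so it suffices that they agree at the \<open>M\<close> distinct points \<open>a = c\<^sub>j q^s\<close>, \<open>s < m\<^sub>j\<close>. There the series is
  symmetric under exchanging \<open>a\<close> with \<open>c\<^sub>j q^m\<^sub>j\<close>, i.e. \<open>m\<^sub>j\<close> with \<open>s\<close>, and \<open>F\<close> and \<open>R\<close> pick up the same
  factor under this exchange; induction on \<open>M\<close> concludes. The factor for \<open>F\<close> is read off from the
  series for small \<open>d\<close> and extends to all \<open>d\<close> because both sides are polynomials in \<open>d\<close>.\<close>

section \<open>Finite q-shifted factorials\<close>

lemma qpoch_0 [simp]: "qpoch q a 0 = 1"
  by (simp add: qpoch_def)

lemma qpoch_Suc: "qpoch q a (Suc k) = qpoch q a k * (1 - a * q ^ k)"
  by (simp add: qpoch_def)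

lemma qpoch_add: "qpoch q a (n + k) = qpoch q a n * qpoch q (a * q ^ n) k"
  by (induction k) (simp_all add: qpoch_Suc power_add mult_ac)

lemma qpoch_Suc_left: "qpoch q a (Suc k) = (1 - a) * qpoch q (a * q) k"
  using qpoch_add[of q a 1 k] by (simp add: qpoch_def)

lemma qpoch_eq_0_iff: "qpoch q a k = 0 \<longleftrightarrow> (\<exists>j<k. a * q ^ j = 1)"
  by (auto simp add: qpoch_def)

lemma qpoch_tendsto: "(f \<longlongrightarrow> x) F \<Longrightarrow> ((\<lambda>n. qpoch q (f n) k) \<longlongrightarrow> qpoch q x k) F"
  unfolding qpoch_def by (intro tendsto_intros)

definition qtri :: "complex \<Rightarrow> nat \<Rightarrow> complex" where
  "qtri q k = (\<Prod>t<k. q ^ t)"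

lemma qtri_0 [simp]: "qtri q 0 = 1"
  by (simp add: qtri_def)

lemma qtri_Suc: "qtri q (Suc k) = qtri q k * q ^ k"
  by (simp add: qtri_def)

lemma qtri_eq_power: "qtri q n = q ^ (\<Sum>t<n. t)"
  by (simp add: qtri_def power_sum)

lemma qtri_nonzero: "q \<noteq> 0 \<Longrightarrow> qtri q n \<noteq> 0"
  by (simp add: qtri_def)

lemma sum_lessThan_id_double: "(\<Sum>t<n. t) * 2 + n = n * (n::nat)"
  by (induction n) (simp_all add: algebra_simps)

lemma qtri_Suc_add: "qtri q (Suc S) * qtri q (Suc n) * q ^ (S * n) = qtri q (Suc (S + n))"
proof -
  have "((\<Sum>t<Suc S. t) + (\<Sum>t<Suc n. t) + S * n) * 2 = (\<Sum>t<Suc (S + n). t) * 2"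
    using sum_lessThan_id_double[of "Suc S"] sum_lessThan_id_double[of "Suc n"]
      sum_lessThan_id_double[of "Suc (S + n)"] by (simp add: algebra_simps)
  then have exponent: "(\<Sum>t<Suc S. t) + (\<Sum>t<Suc n. t) + S * n = (\<Sum>t<Suc (S + n). t)"
    by simp
  show ?thesis
    unfolding qtri_eq_power power_add[symmetric] exponent ..
qed

lemma qtri_complement:
  assumes "k \<le> M"
  shows "qtri q k * qtri q (M - k) * qtri q (Suc M) = q ^ (k * k) * q ^ (M * (M - k))"
proof -
  obtain j where j: "M = k + j"
    using assms le_Suc_ex by blast
  have "((\<Sum>t<k. t) + (\<Sum>t<j. t) + (\<Sum>t<Suc (k + j). t)) * 2 = (k * k + (k + j) * j) * 2"
    using sum_lessThan_id_double[of k] sum_lessThan_id_double[of j]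
      sum_lessThan_id_double[of "Suc (k + j)"] by (simp add: algebra_simps)
  then have "(\<Sum>t<k. t) + (\<Sum>t<j. t) + (\<Sum>t<Suc (k + j). t) = k * k + (k + j) * j"
    by simp
  then show ?thesis
    unfolding qtri_eq_power j by (simp add: power_add[symmetric])
qed

lemma prod_neg_mult_power: "(\<Prod>j<n. - (D * q ^ j)) = (- D) ^ n * qtri q n"
proof -
  have "(\<Prod>j<n. - (D * q ^ j)) = (\<Prod>j<n. (- D) * q ^ j)"
    by simp
  then show ?thesis
    by (simp only: prod.distrib prod_constant card_lessThan qtri_def)
qed

lemma qpoch_inverse_power:
  assumes "q \<noteq> 0"
  shows "qpoch q (inverse (q ^ (k + w))) k * qpoch q q w
    = (-1) ^ k * qtri q k / q ^ (k * (k + w)) * qpoch q q (k + w)"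
proof (induction k arbitrary: w)
  case 0
  show ?case by (simp add: qtri_def)
next
  case (Suc k)
  define x where "x = inverse (q ^ (Suc k + w))"
  have xq: "x * q = inverse (q ^ (k + w))"
    using assms by (simp add: x_def field_simps)
  have e: "Suc k * (Suc k + w) = (Suc k + w) + k * (k + w) + k"
    by (simp add: algebra_simps)
  have "qpoch q x (Suc k) * qpoch q q w = (1 - x) * (qpoch q (x * q) k * qpoch q q w)"
    by (simp add: qpoch_Suc_left mult_ac)
  also have "\<dots> = (1 - x) * ((-1) ^ k * qtri q k / q ^ (k * (k + w)) * qpoch q q (k + w))"
    unfolding xq Suc.IH ..
  also have "\<dots> = (-1) ^ Suc k * qtri q (Suc k) / q ^ (Suc k * (Suc k + w)) * qpoch q q (Suc k + w)"
    unfolding e x_def power_add qtri_Suc using assms by (simp add: qpoch_Suc field_simps power_add)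
  finally show ?case
    by (simp add: x_def)
qed

lemma qpoch_inverse_power_eq_0: "y < k \<Longrightarrow> q \<noteq> 0 \<Longrightarrow> qpoch q (inverse (q ^ y)) k = 0"
  by (auto simp: qpoch_eq_0_iff intro!: exI[of _ y])

lemma qpoch_reflect:
  assumes "q \<noteq> 0" "D \<noteq> 0"
  shows "qpoch q (inverse (q ^ m) * D) m * qtri q (Suc m) = (- D) ^ m * qpoch q (q / D) m"
proof (induction m)
  case 0
  show ?case by (simp add: qtri_def)
next
  case (Suc m)
  have e: "inverse (q ^ Suc m) * D * q = inverse (q ^ m) * D"
    using assms by (simp add: field_simps)
  have "qpoch q (inverse (q ^ Suc m) * D) (Suc m) * qtri q (Suc (Suc m))
      = (1 - inverse (q ^ Suc m) * D) * q ^ Suc m * (qpoch q (inverse (q ^ m) * D) m * qtri q (Suc m))"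
    unfolding qpoch_Suc_left e qtri_Suc[of q "Suc m"] by (simp only: mult_ac)
  also have "\<dots> = (- D) ^ Suc m * qpoch q (q / D) (Suc m)"
    unfolding Suc.IH qpoch_Suc using assms by (simp add: field_simps)
  finally show ?case .
qed

section \<open>Infinite products\<close>

context
  fixes q :: complex
  assumes q0: "q \<noteq> 0" and q1: "norm q < 1"
begin

lemma convergent_prod_qfactors: "convergent_prod (\<lambda>j. 1 - a * q ^ j)"
proof -
  have "summable (\<lambda>j. norm a * norm q ^ j)"
    using q1 by (intro summable_mult summable_geometric) auto
  then have "summable (\<lambda>j. norm ((1 - a * q ^ j) - 1))"
    by (simp add: norm_mult norm_power)
  then show ?thesis
    by (intro abs_convergent_prod_imp_convergent_prod summable_imp_abs_convergent_prod)
qed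

lemma qpoch_LIMSEQ_prodinf: "(\<lambda>n. qpoch q a n) \<longlonglongrightarrow> prodinf (\<lambda>j. 1 - a * q ^ j)"
proof -
  have "(\<lambda>n. qpoch q a (Suc n)) \<longlonglongrightarrow> prodinf (\<lambda>j. 1 - a * q ^ j)"
    using convergent_prod_LIMSEQ[OF convergent_prod_qfactors]
    by (simp add: qpoch_def lessThan_Suc_atMost)
  then show ?thesis
    by (simp add: filterlim_sequentially_Suc)
qed

lemma qpoch_inf_eq_prodinf: "qpoch_inf q a = prodinf (\<lambda>j. 1 - a * q ^ j)"
  unfolding qpoch_inf_def using qpoch_LIMSEQ_prodinf[of a] by (simp add: qpoch_def limI)

lemma qpoch_LIMSEQ: "(\<lambda>n. qpoch q a n) \<longlonglongrightarrow> qpoch_inf q a"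
  using qpoch_LIMSEQ_prodinf qpoch_inf_eq_prodinf by simp

lemma qpoch_inf_split: "qpoch_inf q a = qpoch q a n * qpoch_inf q (a * q ^ n)"
proof -
  have "(\<lambda>k. qpoch q a (k + n)) \<longlonglongrightarrow> qpoch_inf q a"
    by (rule LIMSEQ_ignore_initial_segment[OF qpoch_LIMSEQ])
  moreover have "(\<lambda>k. qpoch q a (k + n)) \<longlonglongrightarrow> qpoch q a n * qpoch_inf q (a * q ^ n)"
    using qpoch_add[of q a n] by (simp add: add.commute[of _ n]) (intro tendsto_intros qpoch_LIMSEQ)
  ultimately show ?thesis
    using LIMSEQ_unique by blast
qed

lemma qpoch_inf_nonzero: "(\<And>j. a * q ^ j \<noteq> 1) \<Longrightarrow> qpoch_inf q a \<noteq> 0"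
  unfolding qpoch_inf_eq_prodinf by (rule prodinf_nonzero[OF convergent_prod_qfactors]) auto

lemma norm_power_q_le_1: "norm (q ^ n) \<le> 1"
  using q1 by (simp add: norm_power power_le_one)

lemma qfactor_neq_1_small:
  assumes "norm a < 1"
  shows "a * q ^ j \<noteq> 1"
proof -
  have "norm (a * q ^ j) \<le> norm a"
    using norm_power_q_le_1[of j] by (simp add: norm_mult mult_left_le)
  then show ?thesis
    using assms by auto
qed

lemma qpoch_nonzero_small: "norm a < 1 \<Longrightarrow> qpoch q a n \<noteq> 0"
  by (simp add: qpoch_eq_0_iff qfactor_neq_1_small)

lemma qpoch_inf_nonzero_small: "norm a < 1 \<Longrightarrow> qpoch_inf q a \<noteq> 0"
  by (intro qpoch_inf_nonzero qfactor_neq_1_small)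

lemma qpoch_inf_nonzero_if_qpoch_nonzero: "(\<And>n. qpoch q a n \<noteq> 0) \<Longrightarrow> qpoch_inf q a \<noteq> 0"
  by (rule qpoch_inf_nonzero) (metis lessI qpoch_eq_0_iff)

lemma power_q_neq_1: "n > 0 \<Longrightarrow> q ^ n \<noteq> 1"
  using q1 by (metis norm_one norm_power power_less_one_iff norm_ge_zero less_irrefl)

lemma qpoch_q_nonzero: "qpoch q q n \<noteq> 0"
  by (auto simp: qpoch_eq_0_iff power_Suc[symmetric] power_q_neq_1 simp del: power_Suc)

lemma norm_qpoch_ge_half:
  assumes "norm x \<le> (1 - norm q) / 2"
  shows "norm (qpoch q x k) \<ge> 1 / 2"
proof -
  have "norm x * 2 \<le> 1 - norm q"
    using assms by (simp add: field_simps)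
  then have x1: "norm x \<le> 1"
    using norm_ge_zero[of q] by linarith
  have "(\<Sum>j<k. norm x * norm q ^ j) \<le> norm x * (\<Sum>j. norm q ^ j)"
    unfolding sum_distrib_left[symmetric] using q1
    by (intro mult_left_mono sum_le_suminf summable_geometric) auto
  also have "\<dots> = norm x / (1 - norm q)"
    using q1 by (simp add: suminf_geometric divide_inverse)
  also have "\<dots> \<le> 1 / 2"
    using assms q1 by (simp add: field_simps)
  finally have small: "(\<Sum>j<k. norm x * norm q ^ j) \<le> 1 / 2" .
  have factor: "norm x * norm q ^ j \<in> {0..1}" for j
    using x1 q1 by (simp add: mult_le_one power_le_one)
  have "1 - (\<Sum>j<k. norm x * norm q ^ j) \<le> (\<Prod>j<k. 1 - norm x * norm q ^ j)"
    using factor by (intro Weierstrass_prod_ineq) auto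
  also have "\<dots> \<le> (\<Prod>j<k. norm (1 - x * q ^ j))"
  proof (rule prod_mono)
    fix j
    have "norm (1::complex) - norm (x * q ^ j) \<le> norm (1 - x * q ^ j)"
      by (rule norm_triangle_ineq2)
    then show "0 \<le> 1 - norm x * norm q ^ j \<and> 1 - norm x * norm q ^ j \<le> norm (1 - x * q ^ j)"
      using factor[of j] by (auto simp: norm_mult norm_power)
  qed
  also have "\<dots> = norm (qpoch q x k)"
    by (simp add: qpoch_def prod_norm)
  finally show ?thesis
    using small by linarith
qed

end

section \<open>The q-Gauss sum\<close>

definition qgauss_term :: "complex \<Rightarrow> complex \<Rightarrow> complex \<Rightarrow> complex \<Rightarrow> nat \<Rightarrow> complex" where
  "qgauss_term q A B C n = qpoch q A n * qpoch q B n / (qpoch q q n * qpoch q C n) * (C / (A * B)) ^ n"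

lemma qgauss_term_Suc:
  "qgauss_term q A B C (Suc n) = qgauss_term q A B C n
     * ((1 - A * q ^ n) * (1 - B * q ^ n) / ((1 - q * q ^ n) * (1 - C * q ^ n)) * (C / (A * B)))"
  by (simp add: qgauss_term_def qpoch_Suc divide_inverse inverse_mult_distrib mult_ac)

lemma qgauss_term_shift:
  assumes "1 - x \<noteq> 0" "1 - x * q ^ n \<noteq> 0"
  shows "qgauss_term q A B (x * q) n = qgauss_term q A B x n * (q ^ n * (1 - x) / (1 - x * q ^ n))"
proof -
  have e: "qpoch q (x * q) n = qpoch q x n * (1 - x * q ^ n) / (1 - x)"
    using qpoch_Suc_left[of q x n] assms by (simp add: qpoch_Suc field_simps)
  show ?thesis
    unfolding qgauss_term_def e using assms by (simp add: power_mult_distrib field_simps)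
qed

lemma qgauss_telescoping_step:
  fixes t x X A B Q :: complex
  assumes "1 - x \<noteq> 0" "1 - x * X \<noteq> 0" "A \<noteq> 0" "B \<noteq> 0" "1 - Q * X \<noteq> 0"
  shows "- t * (1 - X) + (1 - x / (A * B)) * t - (1 - x / A) * (1 - x / B) / (1 - x) * (t * (X * (1 - x) / (1 - x * X)))
     = - (t * ((1 - A * X) * (1 - B * X) / ((1 - Q * X) * (1 - x * X)) * (x / (A * B)))) * (1 - Q * X)"
proof -
  have "1 - x / A = (A - x) / A" "1 - x / B = (B - x) / B" "1 - x / (A * B) = (A * B - x) / (A * B)"
    using assms by (auto simp: field_simps)
  then show ?thesis
    using assms by (simp add: divide_simps) (simp add: algebra_simps)
qed

context
  fixes q :: complex
  assumes q0: "q \<noteq> 0" and q1: "norm q < 1"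
begin

lemma summable_qgauss_term:
  assumes "norm (C / (A * B)) < 1"
  shows "summable (qgauss_term q A B C)"
proof -
  define z where "z = C / (A * B)"
  define \<rho> where "\<rho> n = (1 - A * q ^ n) * (1 - B * q ^ n) / ((1 - q * q ^ n) * (1 - C * q ^ n)) * z" for n
  define r where "r = (1 + norm z) / 2"
  have "(\<lambda>n. norm (\<rho> n)) \<longlonglongrightarrow> norm ((1 - A * 0) * (1 - B * 0) / ((1 - q * 0) * (1 - C * 0)) * z)"
    unfolding \<rho>_def using q1 by (intro tendsto_intros LIMSEQ_power_zero) auto
  moreover have "norm z < r"
    using assms by (simp add: r_def z_def)
  ultimately have "eventually (\<lambda>n. norm (\<rho> n) < r) sequentially"
    by (intro order_tendstoD) simp_all
  then obtain N where N: "\<And>n. n \<ge> N \<Longrightarrow> norm (\<rho> n) < r"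
    by (auto simp: eventually_sequentially)
  show ?thesis
  proof (rule summable_ratio_test)
    show "r < 1"
      using assms by (simp add: r_def z_def)
    fix n
    assume "n \<ge> N"
    have "qgauss_term q A B C (Suc n) = qgauss_term q A B C n * \<rho> n"
      by (simp add: qgauss_term_Suc \<rho>_def z_def)
    then have "norm (qgauss_term q A B C (Suc n)) = norm (qgauss_term q A B C n) * norm (\<rho> n)"
      by (simp add: norm_mult)
    also have "\<dots> \<le> norm (qgauss_term q A B C n) * r"
      using N[OF \<open>n \<ge> N\<close>] by (intro mult_left_mono) auto
    finally show "norm (qgauss_term q A B C (Suc n)) \<le> r * norm (qgauss_term q A B C n)"
      by (simp add: mult_ac)
  qed
qed

text \<open>Heine's contiguous relation, first for partial sums, where it telescopes.\<close>

lemma qgauss_partial_sums_contiguous: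
  assumes A: "A \<noteq> 0" and B: "B \<noteq> 0" and x1: "1 - x \<noteq> 0" and xq: "\<And>n. 1 - x * q ^ n \<noteq> 0"
  shows "(1 - x / (A * B)) * (\<Sum>n<N. qgauss_term q A B x n)
      - (1 - x / A) * (1 - x / B) / (1 - x) * (\<Sum>n<N. qgauss_term q A B (x * q) n)
    = - qgauss_term q A B x N * (1 - q ^ N)"
proof (induction N)
  case (Suc N)
  define K where "K = (1 - x / A) * (1 - x / B) / (1 - x)"
  define t where "t = qgauss_term q A B x N"
  have "1 - q * q ^ N \<noteq> 0"
    using power_q_neq_1[OF q0 q1, of "Suc N"] by auto
  have "(1 - x / (A * B)) * (\<Sum>n<Suc N. qgauss_term q A B x n) - K * (\<Sum>n<Suc N. qgauss_term q A B (x * q) n)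
     = ((1 - x / (A * B)) * (\<Sum>n<N. qgauss_term q A B x n) - K * (\<Sum>n<N. qgauss_term q A B (x * q) n))
       + (1 - x / (A * B)) * t - K * qgauss_term q A B (x * q) N"
    by (simp add: t_def algebra_simps)
  also have "\<dots> = - t * (1 - q ^ N) + (1 - x / (A * B)) * t - K * (t * (q ^ N * (1 - x) / (1 - x * q ^ N)))"
    using Suc.IH qgauss_term_shift[OF x1 xq[of N]] by (simp add: t_def K_def)
  also have "\<dots> = - (t * ((1 - A * q ^ N) * (1 - B * q ^ N) / ((1 - q * q ^ N) * (1 - x * q ^ N)) * (x / (A * B))))
      * (1 - q * q ^ N)"
    unfolding K_def by (rule qgauss_telescoping_step[OF x1 xq A B \<open>1 - q * q ^ N \<noteq> 0\<close>])
  also have "\<dots> = - qgauss_term q A B x (Suc N) * (1 - q ^ Suc N)"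
    by (simp add: t_def qgauss_term_Suc)
  finally show ?case
    unfolding K_def .
qed simp

lemma qgauss_contiguous:
  assumes A: "A \<noteq> 0" and B: "B \<noteq> 0" and x: "\<And>n. qpoch q x n \<noteq> 0"
    and z: "norm (x / (A * B)) < 1"
  shows "(1 - x / (A * B)) * suminf (qgauss_term q A B x)
    = (1 - x / A) * (1 - x / B) / (1 - x) * suminf (qgauss_term q A B (x * q))"
proof -
  define K where "K = (1 - x / A) * (1 - x / B) / (1 - x)"
  have x1: "1 - x \<noteq> 0"
    using x[of 1] by (simp add: qpoch_def)
  have xq: "1 - x * q ^ n \<noteq> 0" for n
    using x[of "Suc n"] by (simp add: qpoch_Suc)
  have "norm (x * q / (A * B)) = norm (x / (A * B)) * norm q"
    by (simp add: norm_mult norm_divide)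
  also have "\<dots> \<le> norm (x / (A * B))"
    using q1 by (intro mult_left_le) auto
  finally have zq: "norm (x * q / (A * B)) < 1"
    using z by simp
  have "(\<lambda>N. (1 - x / (A * B)) * (\<Sum>n<N. qgauss_term q A B x n) - K * (\<Sum>n<N. qgauss_term q A B (x * q) n))
      \<longlonglongrightarrow> (1 - x / (A * B)) * suminf (qgauss_term q A B x) - K * suminf (qgauss_term q A B (x * q))"
    by (intro tendsto_intros summable_LIMSEQ summable_qgauss_term z zq)
  moreover have "(\<lambda>N. - qgauss_term q A B x N * (1 - q ^ N)) \<longlonglongrightarrow> - 0 * (1 - 0)"
    using q1 by (intro tendsto_intros summable_LIMSEQ_zero summable_qgauss_term z LIMSEQ_power_zero)
  ultimately have "(1 - x / (A * B)) * suminf (qgauss_term q A B x) - K * suminf (qgauss_term q A B (x * q)) = 0"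
    unfolding K_def qgauss_partial_sums_contiguous[OF A B x1 xq] using LIMSEQ_unique by fastforce
  then show ?thesis
    unfolding K_def by simp
qed

lemma qgauss_iterate:
  assumes A: "A \<noteq> 0" and B: "B \<noteq> 0" and C: "\<And>n. qpoch q C n \<noteq> 0"
    and z: "norm (C / (A * B)) < 1"
  shows "suminf (qgauss_term q A B C)
    = qpoch q (C / A) N * qpoch q (C / B) N / (qpoch q C N * qpoch q (C / (A * B)) N)
      * suminf (qgauss_term q A B (C * q ^ N))"
proof (induction N)
  case (Suc N)
  define x where "x = C * q ^ N"
  have x: "qpoch q x n \<noteq> 0" for n
    using C[of "N + n"] by (simp add: qpoch_add x_def)
  have "norm (x / (A * B)) = norm (C / (A * B)) * norm (q ^ N)"
    by (simp add: x_def norm_mult norm_divide)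
  also have "\<dots> \<le> norm (C / (A * B))"
    using norm_power_q_le_1[OF q0 q1, of N] by (intro mult_left_le) auto
  finally have zx: "norm (x / (A * B)) < 1"
    using z by simp
  then have nz: "1 - x / (A * B) \<noteq> 0"
    by auto
  have "1 - x \<noteq> 0"
    using x[of 1] by (simp add: qpoch_def)
  define K where "K = (1 - x / A) * (1 - x / B) / ((1 - x) * (1 - x / (A * B)))"
  have "suminf (qgauss_term q A B x)
      = ((1 - x / A) * (1 - x / B) / (1 - x) * suminf (qgauss_term q A B (x * q))) / (1 - x / (A * B))"
    using qgauss_contiguous[OF A B x zx] nz by (metis nonzero_mult_div_cancel_left)
  also have "\<dots> = K * suminf (qgauss_term q A B (x * q))"
    unfolding K_def using nz \<open>1 - x \<noteq> 0\<close> by (simp add: field_simps)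
  finally have step: "suminf (qgauss_term q A B x) = K * suminf (qgauss_term q A B (x * q))" .
  have ratio: "qpoch q (C / A) (Suc N) * qpoch q (C / B) (Suc N) / (qpoch q C (Suc N) * qpoch q (C / (A * B)) (Suc N))
     = qpoch q (C / A) N * qpoch q (C / B) N / (qpoch q C N * qpoch q (C / (A * B)) N) * K"
    by (simp add: qpoch_Suc x_def K_def divide_inverse inverse_mult_distrib mult_ac)
  have xq: "x * q = C * q ^ Suc N"
    by (simp add: x_def mult_ac)
  show ?case
    unfolding ratio Suc.IH x_def[symmetric] step xq by (simp only: mult_ac)
qed simp

lemma qpoch_bounded:
  obtains K where "K > 0" "\<And>k. norm (qpoch q a k) \<le> K"
  using convergent_imp_Bseq[OF convergentI[OF qpoch_LIMSEQ[OF q0 q1]]] by (auto elim!: BseqE)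

lemma inverse_qpoch_q_bounded:
  obtains K where "K > 0" "\<And>k. norm (1 / qpoch q q k) \<le> K"
proof -
  have "qpoch_inf q q \<noteq> 0"
    by (intro qpoch_inf_nonzero_if_qpoch_nonzero qpoch_q_nonzero q0 q1)
  then have "(\<lambda>k. 1 / qpoch q q k) \<longlonglongrightarrow> 1 / qpoch_inf q q"
    by (intro tendsto_intros qpoch_LIMSEQ[OF q0 q1])
  then have "Bseq (\<lambda>k. 1 / qpoch q q k)"
    by (intro convergent_imp_Bseq convergentI)
  then show ?thesis
    using that by (auto elim!: BseqE)
qed

lemma norm_qgauss_term_le:
  assumes "norm x \<le> (1 - norm q) / 2" and "norm (x / (A * B)) \<le> r" and "KA \<ge> 0" "KB \<ge> 0" "KQ \<ge> 0"
    and "norm (qpoch q A k) \<le> KA" "norm (qpoch q B k) \<le> KB" "norm (1 / qpoch q q k) \<le> KQ"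
  shows "norm (qgauss_term q A B x k) \<le> KA * KB * KQ * 2 * r ^ k"
proof -
  have "norm (qpoch q x k) \<ge> 1 / 2"
    using norm_qpoch_ge_half[OF q0 q1 assms(1)] .
  moreover from this have "qpoch q x k \<noteq> 0"
    by auto
  ultimately have "norm (1 / qpoch q x k) \<le> 2"
    by (simp add: norm_divide field_simps)
  then have "norm (qpoch q A k) * norm (qpoch q B k) * norm (1 / qpoch q q k) * norm (1 / qpoch q x k)
      * norm (x / (A * B)) ^ k \<le> KA * KB * KQ * 2 * r ^ k"
    using assms by (intro mult_mono power_mono) auto
  then show ?thesis
    by (simp add: qgauss_term_def norm_mult norm_divide norm_power)
qed

lemma qgauss_term_shifted_tendsto:
  assumes "A \<noteq> 0" "B \<noteq> 0"
  shows "(\<lambda>N. qgauss_term q A B (C * q ^ N) k) \<longlonglongrightarrow> (if k = 0 then 1 else 0)"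
proof -
  have "(\<lambda>N. qpoch q A k * qpoch q B k / (qpoch q q k * qpoch q (C * q ^ N) k) * (C * q ^ N / (A * B)) ^ k)
      \<longlonglongrightarrow> qpoch q A k * qpoch q B k / (qpoch q q k * qpoch q (C * 0) k) * (C * 0 / (A * B)) ^ k"
    using qpoch_q_nonzero[OF q0 q1, of k] assms q1
    by (intro tendsto_intros qpoch_tendsto LIMSEQ_power_zero) (auto simp: qpoch_def)
  then show ?thesis
    by (cases k) (auto simp: qgauss_term_def qpoch_def)
qed

lemma qgauss_tail_tendsto_1:
  assumes A: "A \<noteq> 0" and B: "B \<noteq> 0" and z: "norm (C / (A * B)) < 1"
  shows "(\<lambda>N. suminf (qgauss_term q A B (C * q ^ N))) \<longlonglongrightarrow> 1"
proof -
  obtain KA KB KQ where K: "KA > 0" "KB > 0" "KQ > 0"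
    and bounds: "\<And>k. norm (qpoch q A k) \<le> KA" "\<And>k. norm (qpoch q B k) \<le> KB"
      "\<And>k. norm (1 / qpoch q q k) \<le> KQ"
    by (metis qpoch_bounded inverse_qpoch_q_bounded)
  define r where "r = norm (C / (A * B))"
  have "(\<lambda>N. norm (C * q ^ N)) \<longlonglongrightarrow> 0"
    using q1 by (intro tendsto_norm_zero tendsto_mult_right_zero LIMSEQ_power_zero)
  moreover have "0 < (1 - norm q) / 2"
    using q1 by simp
  ultimately have "eventually (\<lambda>N. norm (C * q ^ N) < (1 - norm q) / 2) sequentially"
    by (rule order_tendstoD)
  then obtain N0 where N0: "\<And>N. N \<ge> N0 \<Longrightarrow> norm (C * q ^ N) < (1 - norm q) / 2"
    by (auto simp: eventually_sequentially)
  have "norm (C * q ^ N / (A * B)) \<le> r" for N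
    using norm_power_q_le_1[OF q0 q1, of N]
    by (simp add: r_def norm_mult norm_divide mult_left_le divide_right_mono)
  then have bound: "norm (qgauss_term q A B (C * q ^ N) k) \<le> KA * KB * KQ * 2 * r ^ k"
    if "N \<ge> N0" for N k
    using N0[OF that] K bounds by (intro norm_qgauss_term_le) auto
  have "eventually (\<lambda>N. summable (\<lambda>k. norm (qgauss_term q A B (C * q ^ N) k))) sequentially \<and>
      summable (\<lambda>k. norm (if k = 0 then 1 else 0 :: complex)) \<and>
      (\<lambda>N. suminf (qgauss_term q A B (C * q ^ N))) \<longlonglongrightarrow> (\<Sum>k. if k = 0 then 1 else 0 :: complex)"
  proof (rule tannerys_theorem[where M = "\<lambda>k. KA * KB * KQ * 2 * r ^ k"])
    show "eventually (\<lambda>(k, N). norm (qgauss_term q A B (C * q ^ N) k) \<le> KA * KB * KQ * 2 * r ^ k)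
        (at_top \<times>\<^sub>F sequentially)"
      unfolding eventually_prod_sequentially using bound by auto
    show "summable (\<lambda>k. KA * KB * KQ * 2 * r ^ k)"
      using z by (intro summable_mult summable_geometric) (auto simp: r_def)
  qed (use qgauss_term_shifted_tendsto[OF A B] in auto)
  moreover have "(\<Sum>k. if k = 0 then 1 else 0 :: complex) = 1"
    using sums_single[of 0 "\<lambda>_. 1 :: complex"] by (simp add: sums_iff)
  ultimately show ?thesis
    by simp
qed

theorem qgauss_sums:
  assumes A: "A \<noteq> 0" and B: "B \<noteq> 0" and C: "\<And>n. qpoch q C n \<noteq> 0"
    and z: "norm (C / (A * B)) < 1"
  shows "qgauss_term q A B C sums
    (qpoch_inf q (C / A) * qpoch_inf q (C / B) / (qpoch_inf q C * qpoch_inf q (C / (A * B))))"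
proof -
  have "qpoch_inf q C * qpoch_inf q (C / (A * B)) \<noteq> 0"
    using qpoch_inf_nonzero_if_qpoch_nonzero[OF q0 q1 C] qpoch_inf_nonzero_small[OF q0 q1 z] by simp
  then have "(\<lambda>N. qpoch q (C / A) N * qpoch q (C / B) N / (qpoch q C N * qpoch q (C / (A * B)) N)
      * suminf (qgauss_term q A B (C * q ^ N)))
    \<longlonglongrightarrow> qpoch_inf q (C / A) * qpoch_inf q (C / B) / (qpoch_inf q C * qpoch_inf q (C / (A * B))) * 1"
    by (intro tendsto_intros qpoch_LIMSEQ[OF q0 q1] qgauss_tail_tendsto_1[OF A B z])
  then have "suminf (qgauss_term q A B C)
      = qpoch_inf q (C / A) * qpoch_inf q (C / B) / (qpoch_inf q C * qpoch_inf q (C / (A * B)))"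
    unfolding qgauss_iterate[OF A B C z, symmetric] by (simp add: LIMSEQ_const_iff)
  then show ?thesis
    using summable_qgauss_term[OF z] by (simp add: summable_sums_iff)
qed

end

section \<open>Expansion in the basis of q-shifted factorials\<close>

lemma degree_coeff_prod_linear:
  fixes f g :: "nat \<Rightarrow> 'a::comm_ring_1"
  shows "degree (\<Prod>j<n. [:f j, g j:]) \<le> n \<and> coeff (\<Prod>j<n. [:f j, g j:]) n = (\<Prod>j<n. g j)"
proof (induction n)
  case (Suc n)
  define P where "P = (\<Prod>j<n. [:f j, g j:])"
  have dP: "degree P \<le> n" and cP: "coeff P n = (\<Prod>j<n. g j)"
    using Suc.IH by (auto simp: P_def)
  have "degree (P * [:f n, g n:]) \<le> degree P + degree [:f n, g n:]"
    by (rule degree_mult_le)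
  also have "\<dots> \<le> Suc n"
    using dP by simp
  finally have "degree (P * [:f n, g n:]) \<le> Suc n" .
  moreover have "coeff P (Suc n) = 0"
    using dP by (intro coeff_eq_0) auto
  ultimately show ?case
    using cP by (simp add: P_def mult_ac)
qed simp

lemma degree_prod_linear_le:
  fixes f g :: "nat \<Rightarrow> 'a::comm_ring_1"
  shows "degree (\<Prod>j<n. [:f j, g j:]) \<le> n"
  using degree_coeff_prod_linear by blast

lemma coeff_prod_linear:
  fixes f g :: "nat \<Rightarrow> 'a::comm_ring_1"
  shows "coeff (\<Prod>j<n. [:f j, g j:]) n = (\<Prod>j<n. g j)"
  using degree_coeff_prod_linear by blast

lemma coeff_mult_degree_le:
  fixes p r :: "'a::comm_ring_1 poly"
  assumes "degree p \<le> k" "degree r \<le> l"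
  shows "coeff (p * r) (k + l) = coeff p k * coeff r l"
proof -
  have "coeff (p * r) (k + l) = (\<Sum>i\<le>k + l. coeff p i * coeff r (k + l - i))"
    by (rule coeff_mult)
  also have "\<dots> = (\<Sum>i\<in>{k}. coeff p i * coeff r (k + l - i))"
  proof (rule sum.mono_neutral_right)
    show "\<forall>i\<in>{..k + l} - {k}. coeff p i * coeff r (k + l - i) = 0"
    proof
      fix i
      assume "i \<in> {..k + l} - {k}"
      then consider "i < k" | "k < i"
        by fastforce
      then show "coeff p i * coeff r (k + l - i) = 0"
        by cases (use assms in \<open>simp_all add: coeff_eq_0\<close>)
    qed
  qed auto
  finally show ?thesis
    by simp
qed

lemma coeff_prod_degree_le:
  fixes P :: "'i \<Rightarrow> 'a::comm_ring_1 poly"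
  assumes "finite I" "\<And>i. i \<in> I \<Longrightarrow> degree (P i) \<le> n i"
  shows "degree (\<Prod>i\<in>I. P i) \<le> (\<Sum>i\<in>I. n i) \<and> coeff (\<Prod>i\<in>I. P i) (\<Sum>i\<in>I. n i) = (\<Prod>i\<in>I. coeff (P i) (n i))"
  using assms
proof (induction I rule: finite_induct)
  case (insert a F)
  then have da: "degree (P a) \<le> n a" and dF: "degree (\<Prod>i\<in>F. P i) \<le> (\<Sum>i\<in>F. n i)"
    and cF: "coeff (\<Prod>i\<in>F. P i) (\<Sum>i\<in>F. n i) = (\<Prod>i\<in>F. coeff (P i) (n i))"
    by auto
  have "degree (P a * (\<Prod>i\<in>F. P i)) \<le> n a + (\<Sum>i\<in>F. n i)"
    using degree_mult_le[of "P a" "\<Prod>i\<in>F. P i"] da dF by linarith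
  moreover have "coeff (P a * (\<Prod>i\<in>F. P i)) (n a + (\<Sum>i\<in>F. n i))
      = coeff (P a) (n a) * (\<Prod>i\<in>F. coeff (P i) (n i))"
    using coeff_mult_degree_le[OF da dF] cF by simp
  ultimately show ?case
    using insert by simp
qed simp

definition qpoch_poly :: "complex \<Rightarrow> complex \<Rightarrow> nat \<Rightarrow> complex poly" where
  "qpoch_poly q u n = (\<Prod>j<n. [:1, - (u * q ^ j):])"

lemma poly_qpoch_poly: "poly (qpoch_poly q u n) x = qpoch q (x * u) n"
  by (simp add: qpoch_poly_def poly_prod qpoch_def mult_ac)

lemma degree_qpoch_poly: "degree (qpoch_poly q u n) \<le> n"
  unfolding qpoch_poly_def by (rule degree_prod_linear_le)

lemma coeff_qpoch_poly: "coeff (qpoch_poly q u n) n = (\<Prod>j<n. - (u * q ^ j))"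
  unfolding qpoch_poly_def by (rule coeff_prod_linear)

text \<open>The polynomials \<open>w \<mapsto> (w; q)\<^sub>k\<close> have exact degree \<open>k\<close>, so they form a basis
  (the q-analogue of Newton's interpolation basis).\<close>

lemma qpoch_basis_expansion:
  fixes q :: complex
  assumes "q \<noteq> 0"
  shows "degree P \<le> n \<Longrightarrow> \<exists>Q. \<forall>w. poly P w = (\<Sum>k\<le>n. Q k * qpoch q w k)"
proof (induction n arbitrary: P)
  case 0
  then have "poly P w = coeff P 0" for w
    by (simp add: poly_altdef)
  then show ?case
    by (intro exI[of _ "\<lambda>_. coeff P 0"]) simp
next
  case (Suc n)
  define r where "r = qpoch_poly q 1 (Suc n)"
  define c where "c = coeff P (Suc n) / coeff r (Suc n)"
  have "coeff r (Suc n) \<noteq> 0"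
    using assms by (simp add: r_def coeff_qpoch_poly)
  then have top: "coeff (P - smult c r) (Suc n) = 0"
    by (simp add: c_def)
  have deg: "degree (P - smult c r) \<le> Suc n"
    using Suc.prems degree_qpoch_poly[of q 1 "Suc n"] degree_smult_le[of c r]
    by (intro degree_diff_le) (auto simp: r_def)
  have "degree (P - smult c r) \<le> n"
  proof (intro degree_le allI impI)
    fix i
    assume "n < i"
    then consider "i = Suc n" | "Suc n < i"
      by linarith
    then show "coeff (P - smult c r) i = 0"
      by cases (use top deg coeff_eq_0[of "P - smult c r" i] in simp_all)
  qed
  then obtain Q where Q: "\<And>w. poly (P - smult c r) w = (\<Sum>k\<le>n. Q k * qpoch q w k)"
    using Suc.IH by blast
  have "poly P w = (\<Sum>k\<le>Suc n. (Q(Suc n := c)) k * qpoch q w k)" for w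
  proof -
    have "poly P w = (\<Sum>k\<le>n. Q k * qpoch q w k) + c * qpoch q w (Suc n)"
      using Q[of w] by (simp add: r_def poly_qpoch_poly algebra_simps)
    also have "(\<Sum>k\<le>n. Q k * qpoch q w k) = (\<Sum>k\<le>n. (Q(Suc n := c)) k * qpoch q w k)"
      by (intro sum.cong) auto
    finally show ?thesis
      by simp
  qed
  then show ?case
    by blast
qed

section \<open>Reduction to q-Gauss sums\<close>

text \<open>The polynomial \<open>G\<close> of the proof sketch above.\<close>

definition ratio_poly :: "complex \<Rightarrow> nat \<Rightarrow> (nat \<Rightarrow> complex) \<Rightarrow> (nat \<Rightarrow> nat) \<Rightarrow> complex poly" where
  "ratio_poly q p c m = smult (1 / (\<Prod>i<p. qpoch q (c i) (m i))) (\<Prod>i<p. \<Prod>t<m i. [:- (c i * q ^ t), 1:])"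

lemma degree_ratio_poly: "degree (ratio_poly q p c m) \<le> (\<Sum>i<p. m i)"
proof -
  have "degree (\<Prod>i<p. \<Prod>t<m i. [:- (c i * q ^ t), 1:]) \<le> (\<Sum>i<p. degree (\<Prod>t<m i. [:- (c i * q ^ t), 1:]))"
    using degree_prod_sum_le[of "{..<p}" "\<lambda>i. \<Prod>t<m i. [:- (c i * q ^ t), 1:]"] by (simp add: o_def)
  also have "\<dots> \<le> (\<Sum>i<p. m i)"
    by (intro sum_mono degree_prod_linear_le)
  finally show ?thesis
    unfolding ratio_poly_def using degree_smult_le order_trans by blast
qed

lemma poly_ratio_poly:
  "poly (ratio_poly q p c m) w = (\<Prod>i<p. \<Prod>t<m i. w - c i * q ^ t) / (\<Prod>i<p. qpoch q (c i) (m i))"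
  by (simp add: ratio_poly_def poly_prod)

definition ratio_coeff :: "complex \<Rightarrow> nat \<Rightarrow> (nat \<Rightarrow> complex) \<Rightarrow> (nat \<Rightarrow> nat) \<Rightarrow> nat \<Rightarrow> complex" where
  "ratio_coeff q p c m = (SOME Q. \<forall>w. poly (ratio_poly q p c m) w = (\<Sum>k\<le>(\<Sum>i<p. m i). Q k * qpoch q w k))"

lemma poly_ratio_poly_expansion:
  assumes "q \<noteq> 0"
  shows "poly (ratio_poly q p c m) w = (\<Sum>k\<le>(\<Sum>i<p. m i). ratio_coeff q p c m k * qpoch q w k)"
proof -
  have "\<exists>Q. \<forall>w. poly (ratio_poly q p c m) w = (\<Sum>k\<le>(\<Sum>i<p. m i). Q k * qpoch q w k)"
    by (rule qpoch_basis_expansion[OF assms degree_ratio_poly])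
  from someI_ex[OF this] show ?thesis
    unfolding ratio_coeff_def by blast
qed

lemma qpoch_shift_ratio:
  assumes "q \<noteq> 0" "qpoch q c y \<noteq> 0" "qpoch q c m \<noteq> 0"
  shows "qpoch q (c * q ^ m) y / qpoch q c y = q ^ (m * y) * (\<Prod>t<m. inverse (q ^ y) - c * q ^ t) / qpoch q c m"
proof -
  have "qpoch q c m * qpoch q (c * q ^ m) y = qpoch q c y * qpoch q (c * q ^ y) m"
    using qpoch_add[of q c m y] qpoch_add[of q c y m] by (simp add: add.commute)
  then have "qpoch q (c * q ^ m) y / qpoch q c y = qpoch q (c * q ^ y) m / qpoch q c m"
    using assms by (simp add: field_simps)
  also have "qpoch q (c * q ^ y) m = (\<Prod>t<m. q ^ y * (inverse (q ^ y) - c * q ^ t))"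
    unfolding qpoch_def using assms by (intro prod.cong) (auto simp: field_simps)
  also have "\<dots> = q ^ (m * y) * (\<Prod>t<m. inverse (q ^ y) - c * q ^ t)"
    by (simp add: prod.distrib power_mult mult.commute[of m y])
  finally show ?thesis
    by simp
qed

definition series_term ::
    "complex \<Rightarrow> nat \<Rightarrow> (nat \<Rightarrow> complex) \<Rightarrow> (nat \<Rightarrow> nat) \<Rightarrow> complex \<Rightarrow> complex \<Rightarrow> complex \<Rightarrow> nat \<Rightarrow> complex" where
  "series_term q p c m a b d y = qpoch q a y * qpoch q b y / (qpoch q q y * qpoch q d y)
     * (\<Prod>i<p. qpoch q (c i * q ^ m i) y / qpoch q (c i) y)
     * (d * inverse (q ^ (\<Sum>i<p. m i)) / (a * b)) ^ y"

definition newton_term :: "complex \<Rightarrow> complex \<Rightarrow> complex \<Rightarrow> complex \<Rightarrow> nat \<Rightarrow> nat \<Rightarrow> complex" where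
  "newton_term q a b d k y = qpoch q a y * qpoch q b y / (qpoch q q y * qpoch q d y) * (d / (a * b)) ^ y
     * qpoch q (inverse (q ^ y)) k"

lemma series_term_expansion:
  assumes q0: "q \<noteq> 0" and c: "\<And>i y. i < p \<Longrightarrow> qpoch q (c i) y \<noteq> 0"
  shows "series_term q p c m a b d y = (\<Sum>k\<le>(\<Sum>i<p. m i). ratio_coeff q p c m k * newton_term q a b d k y)"
proof -
  define M where "M = (\<Sum>i<p. m i)"
  define X where "X = qpoch q a y * qpoch q b y / (qpoch q q y * qpoch q d y)"
  have "(\<Prod>i<p. qpoch q (c i * q ^ m i) y / qpoch q (c i) y)
      = (\<Prod>i<p. q ^ (m i * y) * ((\<Prod>t<m i. inverse (q ^ y) - c i * q ^ t) / qpoch q (c i) (m i)))"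
    using c by (intro prod.cong) (auto simp: qpoch_shift_ratio[OF q0])
  also have "\<dots> = q ^ (M * y) * poly (ratio_poly q p c m) (inverse (q ^ y))"
    unfolding prod.distrib prod_dividef poly_ratio_poly M_def sum_distrib_right power_sum ..
  finally have prod: "(\<Prod>i<p. qpoch q (c i * q ^ m i) y / qpoch q (c i) y)
      = q ^ (M * y) * (\<Sum>k\<le>M. ratio_coeff q p c m k * qpoch q (inverse (q ^ y)) k)"
    unfolding poly_ratio_poly_expansion[OF q0] M_def .
  have power: "(d * inverse (q ^ M) / (a * b)) ^ y * q ^ (M * y) = (d / (a * b)) ^ y"
  proof -
    have "d * inverse (q ^ M) / (a * b) * q ^ M = d / (a * b)"
      using q0 by simp
    then show ?thesis
      by (metis power_mult power_mult_distrib mult.commute)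
  qed
  have "series_term q p c m a b d y = X * ((d * inverse (q ^ M) / (a * b)) ^ y * q ^ (M * y))
      * (\<Sum>k\<le>M. ratio_coeff q p c m k * qpoch q (inverse (q ^ y)) k)"
    unfolding series_term_def prod M_def[symmetric] X_def by (simp only: mult_ac)
  also have "\<dots> = (\<Sum>k\<le>M. X * (d / (a * b)) ^ y * (ratio_coeff q p c m k * qpoch q (inverse (q ^ y)) k))"
    unfolding power sum_distrib_left ..
  also have "\<dots> = (\<Sum>k\<le>M. ratio_coeff q p c m k * newton_term q a b d k y)"
    unfolding newton_term_def X_def by (intro sum.cong refl) (simp only: mult_ac)
  finally show ?thesis
    by (simp add: M_def)
qed

definition newton_weight :: "complex \<Rightarrow> complex \<Rightarrow> complex \<Rightarrow> complex \<Rightarrow> nat \<Rightarrow> complex" where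
  "newton_weight q a b d k = qpoch q a k * qpoch q b k * (d / (a * b)) ^ k * ((-1) ^ k * qtri q k / q ^ (k * k))"

lemma newton_term_shift:
  assumes q0: "q \<noteq> 0" and q1: "norm q < 1" and d: "qpoch q d (k + w) \<noteq> 0"
  shows "newton_term q a b d k (w + k)
    = newton_weight q a b d k / qpoch q d k * qgauss_term q (a * q ^ k) (b * q ^ k) (d * q ^ k) w"
proof -
  have nz: "qpoch q d k \<noteq> 0" "qpoch q (d * q ^ k) w \<noteq> 0" "qpoch q q w \<noteq> 0" "qpoch q q (k + w) \<noteq> 0"
    using d qpoch_q_nonzero[OF q0 q1] unfolding qpoch_add[of q d k w] by simp_all
  have P: "qpoch q (inverse (q ^ (k + w))) k
      = (-1) ^ k * qtri q k / q ^ (k * (k + w)) * qpoch q q (k + w) / qpoch q q w"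
    using qpoch_inverse_power[OF q0, of k w] nz by (metis nonzero_mult_div_cancel_right)
  have Z: "(d / (a * b)) ^ (k + w)
      = (d / (a * b)) ^ k * (d * q ^ k / (a * q ^ k * (b * q ^ k))) ^ w * q ^ (k * (k + w)) / q ^ (k * k)"
  proof -
    have e1: "d * q ^ k / (a * q ^ k * (b * q ^ k)) = d / (a * b) / q ^ k"
      using q0 by (simp add: field_simps)
    have e2: "q ^ (k * (k + w)) / q ^ (k * k) = (q ^ k) ^ w"
      using q0 by (simp add: algebra_simps power_add power_mult)
    have "(d / (a * b)) ^ (k + w) = (d / (a * b)) ^ k * ((d / (a * b) / q ^ k) ^ w * (q ^ k) ^ w)"
      using q0 by (simp add: power_add power_mult_distrib[symmetric])
    also have "\<dots> = (d / (a * b)) ^ k * (d * q ^ k / (a * q ^ k * (b * q ^ k))) ^ w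
        * (q ^ (k * (k + w)) / q ^ (k * k))"
      unfolding e1 e2 by (simp only: mult.assoc)
    finally show ?thesis
      by simp
  qed
  have field_identity: "A1 * A2 * (B1 * B2) / (Qkw * (D1 * D2)) * (Zk * Zw * Pkkw / Pkk) * (s / Pkkw * Qkw / Qw)
      = A1 * B1 * Zk * (s / Pkk) / D1 * (A2 * B2 / (Qw * D2) * Zw)"
    if "Qkw \<noteq> 0" "Pkk \<noteq> 0" "Pkkw \<noteq> 0" "D1 \<noteq> 0" "D2 \<noteq> 0" "Qw \<noteq> 0"
    for A1 A2 B1 B2 Qkw D1 D2 Zk Zw Pkkw Pkk s Qw :: complex
    using that by (simp add: field_simps)
  have "newton_term q a b d k (w + k)
      = (qpoch q a k * qpoch q (a * q ^ k) w) * (qpoch q b k * qpoch q (b * q ^ k) w)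
        / (qpoch q q (k + w) * (qpoch q d k * qpoch q (d * q ^ k) w))
        * (d / (a * b)) ^ (k + w) * qpoch q (inverse (q ^ (k + w))) k"
    unfolding newton_term_def qpoch_add[of q a k w, symmetric] qpoch_add[of q b k w, symmetric]
      qpoch_add[of q d k w, symmetric] by (simp add: add.commute)
  also have "\<dots> = newton_weight q a b d k / qpoch q d k * qgauss_term q (a * q ^ k) (b * q ^ k) (d * q ^ k) w"
    unfolding P Z newton_weight_def qgauss_term_def by (rule field_identity) (use nz q0 in simp_all)
  finally show ?thesis .
qed

definition gauss_factor :: "complex \<Rightarrow> nat \<Rightarrow> complex \<Rightarrow> complex \<Rightarrow> complex \<Rightarrow> complex" where
  "gauss_factor q M a b d = qpoch_inf q (d / a) * qpoch_inf q (d / b)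
     / (qpoch_inf q d * qpoch_inf q (d * inverse (q ^ M) / (a * b)))"

lemma norm_inverse_power_mono:
  fixes q x :: complex
  assumes "q \<noteq> 0" "norm q < 1" "k \<le> M"
  shows "norm (x * inverse (q ^ k)) \<le> norm (x * inverse (q ^ M))"
proof -
  have "norm q ^ M \<le> norm q ^ k"
    using assms by (intro power_decreasing) auto
  then have "inverse (norm q ^ k) \<le> inverse (norm q ^ M)"
    using assms by (intro le_imp_inverse_le) auto
  then have "norm x * inverse (norm q ^ k) \<le> norm x * inverse (norm q ^ M)"
    by (rule mult_left_mono) simp
  then show ?thesis
    by (simp add: norm_mult norm_inverse norm_power)
qed

lemma newton_term_sums:
  assumes q0: "q \<noteq> 0" and q1: "norm q < 1" and a: "a \<noteq> 0" and b: "b \<noteq> 0"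
    and d: "\<And>n. qpoch q d n \<noteq> 0" and kM: "k \<le> M"
    and conv: "norm (d * inverse (q ^ M) / (a * b)) < 1"
  shows "newton_term q a b d k sums
    (gauss_factor q M a b d * newton_weight q a b d k * qpoch q (d * inverse (q ^ M) / (a * b)) (M - k))"
proof -
  have e: "d * q ^ k / (a * q ^ k) = d / a" "d * q ^ k / (b * q ^ k) = d / b"
    "d * q ^ k / (a * q ^ k * (b * q ^ k)) = d * inverse (q ^ k) / (a * b)"
    using q0 by (auto simp: field_simps)
  have "norm (d * inverse (q ^ k)) / norm (a * b) \<le> norm (d * inverse (q ^ M)) / norm (a * b)"
    using norm_inverse_power_mono[OF q0 q1 kM] by (rule divide_right_mono) simp
  then have convk: "norm (d * inverse (q ^ k) / (a * b)) < 1"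
    using conv by (simp add: norm_divide)
  have "qpoch q (d * q ^ k) n \<noteq> 0" for n
    using d[of "k + n"] by (simp add: qpoch_add)
  then have "qgauss_term q (a * q ^ k) (b * q ^ k) (d * q ^ k) sums
      (qpoch_inf q (d / a) * qpoch_inf q (d / b) / (qpoch_inf q (d * q ^ k) * qpoch_inf q (d * inverse (q ^ k) / (a * b))))"
    using qgauss_sums[OF q0 q1, of "a * q ^ k" "b * q ^ k" "d * q ^ k"] q0 a b convk by (simp add: e)
  then have "(\<lambda>w. newton_term q a b d k (w + k)) sums (newton_weight q a b d k / qpoch q d k
      * (qpoch_inf q (d / a) * qpoch_inf q (d / b) / (qpoch_inf q (d * q ^ k) * qpoch_inf q (d * inverse (q ^ k) / (a * b)))))"
    unfolding newton_term_shift[OF q0 q1 d] by (rule sums_mult)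
  moreover have "(\<Sum>i<k. newton_term q a b d k i) = 0"
    using q0 by (intro sum.neutral) (auto simp: newton_term_def qpoch_inverse_power_eq_0)
  ultimately have "newton_term q a b d k sums (newton_weight q a b d k / qpoch q d k
      * (qpoch_inf q (d / a) * qpoch_inf q (d / b) / (qpoch_inf q (d * q ^ k) * qpoch_inf q (d * inverse (q ^ k) / (a * b)))))"
    by (simp add: sums_iff_shift)
  moreover have "qpoch_inf q d = qpoch q d k * qpoch_inf q (d * q ^ k)"
    by (rule qpoch_inf_split[OF q0 q1])
  moreover have "qpoch_inf q (d * inverse (q ^ M) / (a * b))
      = qpoch q (d * inverse (q ^ M) / (a * b)) (M - k) * qpoch_inf q (d * inverse (q ^ k) / (a * b))"
  proof -
    have "d * inverse (q ^ M) / (a * b) * q ^ (M - k) = d * inverse (q ^ k) / (a * b)"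
      using q0 kM by (simp add: field_simps power_diff)
    then show ?thesis
      using qpoch_inf_split[OF q0 q1, of "d * inverse (q ^ M) / (a * b)" "M - k"] by metis
  qed
  moreover have "qpoch_inf q (d * inverse (q ^ M) / (a * b)) \<noteq> 0"
    by (rule qpoch_inf_nonzero_small[OF q0 q1 conv])
  ultimately show ?thesis
    unfolding gauss_factor_def by (simp add: field_simps)
qed

text \<open>The single sum \<open>F(a)\<close>.\<close>

definition newton_sum ::
    "complex \<Rightarrow> nat \<Rightarrow> (nat \<Rightarrow> complex) \<Rightarrow> (nat \<Rightarrow> nat) \<Rightarrow> complex \<Rightarrow> complex \<Rightarrow> complex \<Rightarrow> complex" where
  "newton_sum q p c m a b d = (\<Sum>k\<le>(\<Sum>i<p. m i). ratio_coeff q p c m k * newton_weight q a b d k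
     * qpoch q (d * inverse (q ^ (\<Sum>i<p. m i)) / (a * b)) ((\<Sum>i<p. m i) - k))"

theorem series_term_sums:
  assumes q0: "q \<noteq> 0" and q1: "norm q < 1" and a: "a \<noteq> 0" and b: "b \<noteq> 0"
    and d: "\<And>n. qpoch q d n \<noteq> 0" and c: "\<And>i y. i < p \<Longrightarrow> qpoch q (c i) y \<noteq> 0"
    and conv: "norm (d * inverse (q ^ (\<Sum>i<p. m i)) / (a * b)) < 1"
  shows "series_term q p c m a b d sums (gauss_factor q (\<Sum>i<p. m i) a b d * newton_sum q p c m a b d)"
proof -
  define M where "M = (\<Sum>i<p. m i)"
  have "(\<lambda>y. \<Sum>k\<le>M. ratio_coeff q p c m k * newton_term q a b d k y) sums
     (\<Sum>k\<le>M. ratio_coeff q p c m k * (gauss_factor q M a b d * newton_weight q a b d k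
        * qpoch q (d * inverse (q ^ M) / (a * b)) (M - k)))"
    using newton_term_sums[OF q0 q1 a b d _ conv[folded M_def]] by (intro sums_sum sums_mult) auto
  moreover have "series_term q p c m a b d = (\<lambda>y. \<Sum>k\<le>M. ratio_coeff q p c m k * newton_term q a b d k y)"
    using series_term_expansion[where p = p and c = c, OF q0 c] by (auto simp: M_def)
  ultimately show ?thesis
    unfolding newton_sum_def M_def[symmetric] sum_distrib_left by (simp only: mult_ac)
qed

section \<open>Polynomials in \<open>1/a\<close>\<close>

definition qpoch_recip_poly :: "complex \<Rightarrow> nat \<Rightarrow> complex poly" where
  "qpoch_recip_poly q k = (\<Prod>j<k. [:- (q ^ j), 1:])"

lemma poly_qpoch_recip_poly:
  assumes "a \<noteq> 0"
  shows "poly (qpoch_recip_poly q k) (1 / a) = qpoch q a k / a ^ k"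
proof -
  have "poly (qpoch_recip_poly q k) (1 / a) = (\<Prod>j<k. (1 - a * q ^ j) / a)"
    unfolding qpoch_recip_poly_def poly_prod using assms by (intro prod.cong) (auto simp: field_simps)
  then show ?thesis
    by (simp add: prod_dividef qpoch_def)
qed

lemma degree_qpoch_recip_poly: "degree (qpoch_recip_poly q k) \<le> k"
  unfolding qpoch_recip_poly_def by (rule degree_prod_linear_le)

lemma coeff_qpoch_recip_poly: "coeff (qpoch_recip_poly q k) k = 1"
  unfolding qpoch_recip_poly_def by (simp add: coeff_prod_linear)

definition newton_sum_poly ::
    "complex \<Rightarrow> nat \<Rightarrow> (nat \<Rightarrow> complex) \<Rightarrow> (nat \<Rightarrow> nat) \<Rightarrow> complex \<Rightarrow> complex \<Rightarrow> complex poly" where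
  "newton_sum_poly q p c m b d = (\<Sum>k\<le>(\<Sum>i<p. m i).
     smult (ratio_coeff q p c m k * qpoch q b k * (d / b) ^ k * ((-1) ^ k * qtri q k / q ^ (k * k)))
       (qpoch_recip_poly q k * qpoch_poly q (d * inverse (q ^ (\<Sum>i<p. m i)) / b) ((\<Sum>i<p. m i) - k)))"

lemma poly_newton_sum_poly:
  assumes "a \<noteq> 0" "b \<noteq> 0"
  shows "poly (newton_sum_poly q p c m b d) (1 / a) = newton_sum q p c m a b d"
  unfolding newton_sum_poly_def newton_sum_def poly_sum
proof (intro sum.cong refl)
  fix k
  define M where "M = (\<Sum>i<p. m i)"
  have "1 / a * (d * inverse (q ^ M) / b) = d * inverse (q ^ M) / (a * b)"
    by (simp add: field_simps)
  then show "poly (smult (ratio_coeff q p c m k * qpoch q b k * (d / b) ^ k * ((-1) ^ k * qtri q k / q ^ (k * k)))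
      (qpoch_recip_poly q k * qpoch_poly q (d * inverse (q ^ (\<Sum>i<p. m i)) / b) ((\<Sum>i<p. m i) - k))) (1 / a)
    = ratio_coeff q p c m k * newton_weight q a b d k
      * qpoch q (d * inverse (q ^ (\<Sum>i<p. m i)) / (a * b)) ((\<Sum>i<p. m i) - k)"
    unfolding M_def[symmetric] poly_smult poly_mult poly_qpoch_recip_poly[OF assms(1)] poly_qpoch_poly
      newton_weight_def using assms by (simp add: power_divide field_simps)
qed

lemma degree_newton_sum_poly: "degree (newton_sum_poly q p c m b d) \<le> (\<Sum>i<p. m i)"
  unfolding newton_sum_poly_def
proof (intro degree_sum_le)
  fix k
  assume "k \<in> {..(\<Sum>i<p. m i)}"
  then have k: "k \<le> (\<Sum>i<p. m i)"
    by simp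
  define M where "M = (\<Sum>i<p. m i)"
  define r where "r = qpoch_recip_poly q k * qpoch_poly q (d * inverse (q ^ M) / b) (M - k)"
  have "degree r \<le> k + (M - k)"
    unfolding r_def using degree_mult_le[of "qpoch_recip_poly q k" "qpoch_poly q (d * inverse (q ^ M) / b) (M - k)"]
      degree_qpoch_recip_poly[of q k] degree_qpoch_poly[of q "d * inverse (q ^ M) / b" "M - k"] by linarith
  then show "degree (smult (ratio_coeff q p c m k * qpoch q b k * (d / b) ^ k * ((-1) ^ k * qtri q k / q ^ (k * k)))
      (qpoch_recip_poly q k * qpoch_poly q (d * inverse (q ^ (\<Sum>i<p. m i)) / b) ((\<Sum>i<p. m i) - k)))
    \<le> (\<Sum>i<p. m i)"
    using k degree_smult_le order_trans unfolding r_def M_def by fastforce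
qed auto

lemma top_coeff_newton_weight:
  assumes q0: "q \<noteq> 0" and k: "k \<le> M"
  shows "(d / b) ^ k * ((-1) ^ k * qtri q k / q ^ (k * k)) * (\<Prod>j<M - k. - (d * inverse (q ^ M) / b * q ^ j))
    = (-1) ^ M * (d / b) ^ M / qtri q (Suc M)"
proof -
  have "(- (d * inverse (q ^ M) / b)) ^ (M - k)
      = (-1) ^ (M - k) * (d ^ (M - k) * inverse (q ^ M) ^ (M - k) / b ^ (M - k))"
    by (simp only: power_minus[of "d * inverse (q ^ M) / b"] power_mult_distrib power_divide)
  also have "inverse (q ^ M) ^ (M - k) = inverse (q ^ (M * (M - k)))"
    by (simp add: power_mult power_inverse)
  finally have minus_power: "(- (d * inverse (q ^ M) / b)) ^ (M - k)
      = (-1) ^ (M - k) * (d / b) ^ (M - k) * inverse (q ^ (M * (M - k)))"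
    unfolding power_divide by (simp add: divide_inverse mult_ac)
  have "(d / b) ^ k * ((-1) ^ k * qtri q k / q ^ (k * k)) * (\<Prod>j<M - k. - (d * inverse (q ^ M) / b * q ^ j))
      = ((d / b) ^ k * (d / b) ^ (M - k)) * ((-1) ^ k * (-1) ^ (M - k))
        * (qtri q k * qtri q (M - k) / (q ^ (k * k) * q ^ (M * (M - k))))"
    unfolding prod_neg_mult_power minus_power by (simp add: divide_inverse inverse_mult_distrib mult_ac)
  also have "\<dots> = (d / b) ^ M * (-1) ^ M * (1 / qtri q (Suc M))"
  proof -
    have "qtri q k * qtri q (M - k) / (q ^ (k * k) * q ^ (M * (M - k))) = 1 / qtri q (Suc M)"
      using qtri_complement[OF k, of q] qtri_nonzero[OF q0, of "Suc M"] q0 by (simp add: field_simps)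
    moreover have "(d / b) ^ k * (d / b) ^ (M - k) = (d / b) ^ M" "(-1::complex) ^ k * (-1) ^ (M - k) = (-1) ^ M"
      using k by (simp_all add: power_add[symmetric])
    ultimately show ?thesis
      by simp
  qed
  finally show ?thesis
    by simp
qed

lemma poly_ratio_poly_nonzero:
  assumes "b \<noteq> 0"
  shows "poly (ratio_poly q p c m) b
    = b ^ (\<Sum>i<p. m i) * (\<Prod>i<p. qpoch q (c i / b) (m i)) / (\<Prod>i<p. qpoch q (c i) (m i))"
proof -
  have "(\<Prod>t<m i. b - c i * q ^ t) = b ^ m i * qpoch q (c i / b) (m i)" for i
  proof -
    have "(\<Prod>t<m i. b - c i * q ^ t) = (\<Prod>t<m i. b * (1 - c i / b * q ^ t))"
      using assms by (intro prod.cong) (auto simp: field_simps)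
    then show ?thesis
      by (simp add: prod.distrib qpoch_def)
  qed
  then show ?thesis
    unfolding poly_ratio_poly by (simp add: prod.distrib power_sum)
qed

lemma coeff_newton_sum_poly:
  assumes q0: "q \<noteq> 0" and b: "b \<noteq> 0"
  shows "coeff (newton_sum_poly q p c m b d) (\<Sum>i<p. m i)
    = (-1) ^ (\<Sum>i<p. m i) * d ^ (\<Sum>i<p. m i) / qtri q (Suc (\<Sum>i<p. m i))
      * (\<Prod>i<p. qpoch q (c i / b) (m i)) / (\<Prod>i<p. qpoch q (c i) (m i))"
proof -
  define M where "M = (\<Sum>i<p. m i)"
  define K where "K = (-1) ^ M * (d / b) ^ M / qtri q (Suc M)"
  have "coeff (qpoch_recip_poly q k * qpoch_poly q (d * inverse (q ^ M) / b) (M - k)) M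
      = (\<Prod>j<M - k. - (d * inverse (q ^ M) / b * q ^ j))" if "k \<le> M" for k
    using coeff_mult_degree_le[OF degree_qpoch_recip_poly degree_qpoch_poly, of q k q _ "M - k"] that
    by (simp add: coeff_qpoch_recip_poly coeff_qpoch_poly)
  then have "coeff (newton_sum_poly q p c m b d) M
      = (\<Sum>k\<le>M. ratio_coeff q p c m k * qpoch q b k * ((d / b) ^ k * ((-1) ^ k * qtri q k / q ^ (k * k))
          * (\<Prod>j<M - k. - (d * inverse (q ^ M) / b * q ^ j))))"
    unfolding newton_sum_poly_def coeff_sum coeff_smult M_def[symmetric]
    by (intro sum.cong refl) (simp add: mult_ac)
  also have "\<dots> = K * poly (ratio_poly q p c m) b"
    unfolding poly_ratio_poly_expansion[OF q0] M_def[symmetric] sum_distrib_left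
  proof (intro sum.cong refl)
    fix k
    assume "k \<in> {..M}"
    then have "k \<le> M"
      by simp
    show "ratio_coeff q p c m k * qpoch q b k * ((d / b) ^ k * ((-1) ^ k * qtri q k / q ^ (k * k))
        * (\<Prod>j<M - k. - (d * inverse (q ^ M) / b * q ^ j))) = K * (ratio_coeff q p c m k * qpoch q b k)"
      unfolding top_coeff_newton_weight[OF q0 \<open>k \<le> M\<close>] K_def by (simp only: mult_ac)
  qed
  finally show ?thesis
    unfolding poly_ratio_poly_nonzero[OF b] K_def M_def[symmetric] using b
    by (simp add: power_divide field_simps)
qed

section \<open>Leading coefficient of the multiple sum\<close>

lemma qpoch_reverse:
  assumes "q \<noteq> 0" "x \<noteq> 0"
  shows "qpoch q x n = (- x) ^ n * qtri q n * qpoch q (q / (x * q ^ n)) n"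
proof (induction n)
  case (Suc n)
  have "q / (x * q ^ Suc n) * q = q / (x * q ^ n)" "1 - q / (x * q ^ Suc n) = 1 - 1 / (x * q ^ n)"
    using assms by (simp_all add: field_simps)
  then have shift: "qpoch q (q / (x * q ^ Suc n)) (Suc n) = (1 - 1 / (x * q ^ n)) * qpoch q (q / (x * q ^ n)) n"
    unfolding qpoch_Suc_left by simp
  have factor: "(- x) ^ Suc n * qtri q (Suc n) * (1 - 1 / (x * q ^ n)) = (- x) ^ n * qtri q n * (1 - x * q ^ n)"
    using assms by (simp add: qtri_Suc field_simps)
  have "qpoch q x (Suc n) = ((- x) ^ n * qtri q n * (1 - x * q ^ n)) * qpoch q (q / (x * q ^ n)) n"
    unfolding qpoch_Suc Suc.IH by (simp only: mult_ac)
  also have "\<dots> = (- x) ^ Suc n * qtri q (Suc n) * ((1 - 1 / (x * q ^ n)) * qpoch q (q / (x * q ^ n)) n)"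
    unfolding factor[symmetric] by (simp only: mult_ac)
  finally show ?case
    unfolding shift .
qed simp

lemma cross_factor_pair:
  fixes q r :: complex
  assumes q0: "q \<noteq> 0" and r0: "r \<noteq> 0" and r1: "r \<noteq> 1"
    and h1: "qpoch q (q * r) A \<noteq> 0" and h2: "qpoch q (q / r) B \<noteq> 0"
  shows "(r * q ^ A - q ^ B) / (r - 1) * (qpoch q (inverse (q ^ B) * r) A / qpoch q (q * r) A)
    * (qpoch q (inverse (q ^ A) / r) B / qpoch q (q / r) B) = 1 / q ^ (A * B)"
proof -
  define \<rho> where "\<rho> = inverse (q ^ B) * r"
  define T where "T = qtri q B"
  define EN where "EN = (- (inverse (q ^ A) / r)) ^ B"
  define ED where "ED = (- (q / r)) ^ B"
  have den_B: "qpoch q (q / r) B = ED * T * qpoch q \<rho> B"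
    using qpoch_reverse[OF q0, of "q / r" B] q0 r0 by (simp add: \<rho>_def ED_def T_def field_simps)
  have num_B: "qpoch q (inverse (q ^ A) / r) B = EN * T * qpoch q (\<rho> * q ^ Suc A) B"
    using qpoch_reverse[OF q0, of "inverse (q ^ A) / r" B] q0 r0
    by (simp add: \<rho>_def EN_def T_def field_simps power_add)
  have den_A: "qpoch q (q * r) A = qpoch q (\<rho> * q ^ Suc B) A"
    using q0 by (simp add: \<rho>_def field_simps)
  have num1: "r * q ^ A - q ^ B = - (q ^ B) * (1 - \<rho> * q ^ A)" and den1: "r - 1 = - (1 - \<rho> * q ^ B)"
    using q0 by (simp_all add: \<rho>_def field_simps)
  have split: "qpoch q \<rho> A * (1 - \<rho> * q ^ A) * qpoch q (\<rho> * q ^ Suc A) B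
      = qpoch q \<rho> B * (1 - \<rho> * q ^ B) * qpoch q (\<rho> * q ^ Suc B) A"
    using qpoch_add[of q \<rho> "Suc A" B] qpoch_add[of q \<rho> "Suc B" A]
    by (simp only: qpoch_Suc add.commute[of _ "Suc _"] mult.assoc) (simp add: ac_simps)
  have nz: "qpoch q \<rho> B * (1 - \<rho> * q ^ B) * qpoch q (\<rho> * q ^ Suc B) A \<noteq> 0" "T \<noteq> 0" "ED \<noteq> 0"
    using h1 h2 r1 q0 den_A den_B den1 by (auto simp: T_def qtri_nonzero)
  have cancellation: "(- QB * u) / (- v) * (PA / RA) * ((EN * T * RB) / (ED * T * PB)) = QB * EN / ED"
    if "PB * v * RA \<noteq> 0" "T \<noteq> 0" "ED \<noteq> 0" "PA * u * RB = PB * v * RA"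
    for QB u v PA RA RB PB :: complex
  proof -
    have "(- QB * u) / (- v) * (PA / RA) * ((EN * T * RB) / (ED * T * PB))
        = QB * EN / ED * ((PA * u * RB) / (PB * v * RA))"
      using that by (simp add: field_simps)
    then show ?thesis
      using that by simp
  qed
  have "- (inverse (q ^ A) / r) * q ^ Suc A = - (q / r)"
    using q0 by (simp add: field_simps)
  then have "ED = EN * (q ^ Suc A) ^ B"
    unfolding EN_def ED_def by (metis power_mult_distrib)
  moreover have "(q ^ Suc A) ^ B = q ^ B * q ^ (A * B)"
    by (simp add: power_mult[symmetric] power_add[symmetric] algebra_simps)
  ultimately have "q ^ B * EN / ED = 1 / q ^ (A * B)"
    using nz(3) q0 by (simp add: field_simps)
  then show ?thesis
    unfolding num1 den1 den_B num_B den_A \<rho>_def[symmetric] using cancellation[OF nz split] by simp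
qed

definition cross_factor :: "complex \<Rightarrow> (nat \<Rightarrow> complex) \<Rightarrow> (nat \<Rightarrow> nat) \<Rightarrow> (nat \<Rightarrow> nat) \<Rightarrow> nat \<Rightarrow> nat \<Rightarrow> complex" where
  "cross_factor q c m x i k = qpoch q (inverse (q ^ m k) * c i / c k) (x i) / qpoch q (q * c i / c k) (x i)"

definition cross_prod :: "complex \<Rightarrow> nat \<Rightarrow> (nat \<Rightarrow> complex) \<Rightarrow> (nat \<Rightarrow> nat) \<Rightarrow> (nat \<Rightarrow> nat) \<Rightarrow> complex" where
  "cross_prod q p c m x = (\<Prod>i<p. \<Prod>k<p. cross_factor q c m x i k)"

lemma cross_prod_Suc: "cross_prod q (Suc p) c m x = cross_prod q p c m x
    * (\<Prod>i<p. cross_factor q c m x i p) * (\<Prod>k<p. cross_factor q c m x p k) * cross_factor q c m x p p"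
  unfolding cross_prod_def by (simp add: prod.distrib mult_ac)

lemma vdm_quot_Suc: "vdm_quot q (Suc p) c x
    = vdm_quot q p c x * (\<Prod>i<p. (c i * q ^ x i - c p * q ^ x p) / (c i - c p))"
  unfolding vdm_quot_def by simp

lemma cross_factor_diagonal:
  assumes q0: "q \<noteq> 0" and q1: "norm q < 1" and "c k \<noteq> 0"
  shows "cross_factor q c m m k k = (-1) ^ m k / qtri q (Suc (m k))"
  using qpoch_reflect[OF q0, of 1 "m k"] qtri_nonzero[OF q0, of "Suc (m k)"] qpoch_q_nonzero[OF q0 q1, of "m k"] assms(3)
  unfolding cross_factor_def by (simp add: field_simps)

lemma vdm_cross_factor_pair:
  assumes q0: "q \<noteq> 0" and ci: "c i \<noteq> 0" and ck: "c k \<noteq> 0" and cik: "c i \<noteq> c k"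
    and "qpoch q (q * c i / c k) (m i) \<noteq> 0" "qpoch q (q * c k / c i) (m k) \<noteq> 0"
  shows "(c i * q ^ m i - c k * q ^ m k) / (c i - c k) * cross_factor q c m m i k * cross_factor q c m m k i
    = 1 / q ^ (m i * m k)"
proof -
  define r where "r = c i / c k"
  have "r \<noteq> 0" "r \<noteq> 1"
    using ci ck cik by (auto simp: r_def)
  moreover have "qpoch q (q * r) (m i) \<noteq> 0" "qpoch q (q / r) (m k) \<noteq> 0"
    using assms(5,6) by (auto simp: r_def)
  moreover have "(r * q ^ m i - q ^ m k) / (r - 1) = (c i * q ^ m i - c k * q ^ m k) / (c i - c k)"
    using ck cik by (simp add: r_def field_simps)
  moreover have "q / r = q * c k / c i" "inverse (q ^ m i) / r = inverse (q ^ m i) * c k / c i"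
    by (simp_all add: r_def)
  ultimately show ?thesis
    using cross_factor_pair[OF q0, of r "m i" "m k"] unfolding cross_factor_def by (simp add: r_def mult_ac)
qed

lemma vdm_quot_cross_prod_diagonal:
  assumes q0: "q \<noteq> 0" and q1: "norm q < 1"
    and "\<And>i. i < p \<Longrightarrow> c i \<noteq> 0" and "\<And>i k. i < p \<Longrightarrow> k < p \<Longrightarrow> i \<noteq> k \<Longrightarrow> c i \<noteq> c k"
    and "\<And>i k. i < p \<Longrightarrow> k < p \<Longrightarrow> qpoch q (q * c i / c k) (m i) \<noteq> 0"
  shows "vdm_quot q p c m * cross_prod q p c m m = (-1) ^ (\<Sum>i<p. m i) / qtri q (Suc (\<Sum>i<p. m i))"
  using assms(3-)
proof (induction p)
  case 0
  show ?case by (simp add: vdm_quot_def cross_prod_def qtri_def)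
next
  case (Suc p)
  define S where "S = (\<Sum>i<p. m i)"
  have IH: "vdm_quot q p c m * cross_prod q p c m m = (-1) ^ S / qtri q (Suc S)"
    unfolding S_def using Suc.prems by (intro Suc.IH) auto
  have pair: "(c i * q ^ m i - c p * q ^ m p) / (c i - c p) * cross_factor q c m m i p * cross_factor q c m m p i
      = 1 / q ^ (m i * m p)" if "i < p" for i
    using Suc.prems that by (intro vdm_cross_factor_pair q0) auto
  have diagonal: "cross_factor q c m m p p = (-1) ^ m p / qtri q (Suc (m p))"
    using Suc.prems by (intro cross_factor_diagonal q0 q1) auto
  have "vdm_quot q (Suc p) c m * cross_prod q (Suc p) c m m
      = (vdm_quot q p c m * cross_prod q p c m m)
        * (\<Prod>i<p. (c i * q ^ m i - c p * q ^ m p) / (c i - c p) * cross_factor q c m m i p * cross_factor q c m m p i)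
        * cross_factor q c m m p p"
    unfolding vdm_quot_Suc cross_prod_Suc prod.distrib by (simp only: mult_ac)
  also have "\<dots> = (-1) ^ S / qtri q (Suc S) * (1 / q ^ (S * m p)) * ((-1) ^ m p / qtri q (Suc (m p)))"
    unfolding IH diagonal using pair
    by (simp add: S_def prod_dividef power_sum sum_distrib_right)
  also have "\<dots> = (-1) ^ (S + m p) / qtri q (Suc (S + m p))"
    unfolding qtri_Suc_add[symmetric] by (simp add: power_add field_simps)
  finally show ?case
    by (simp add: S_def)
qed

lemma top_coeff_box_factor:
  assumes q0: "q \<noteq> 0" and c0: "c \<noteq> 0" and d0: "d \<noteq> 0" and h: "qpoch q (q * c / d) m \<noteq> 0"
  shows "qpoch q (inverse (q ^ m) * d / c) m * (\<Prod>t<m. - (c * q ^ t)) / qpoch q (q * c / d) m = d ^ m / q ^ m"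
proof -
  have "qpoch q (inverse (q ^ m) * (d / c)) m * qtri q (Suc m) = (- (d / c)) ^ m * qpoch q (q / (d / c)) m"
    using c0 d0 by (intro qpoch_reflect q0) simp
  then have reflected: "qpoch q (inverse (q ^ m) * d / c) m
      = (- (d / c)) ^ m * qpoch q (q * c / d) m / (qtri q m * q ^ m)"
    using qtri_nonzero[OF q0, of m] q0 by (simp add: qtri_Suc field_simps)
  have "(- (d / c)) ^ m * (- c) ^ m = d ^ m"
    using c0 by (simp flip: power_mult_distrib)
  moreover have "qpoch q (inverse (q ^ m) * d / c) m * ((- c) ^ m * qtri q m) / qpoch q (q * c / d) m
      = (- (d / c)) ^ m * (- c) ^ m / q ^ m"
    unfolding reflected using h qtri_nonzero[OF q0, of m] q0 by (simp add: field_simps)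
  ultimately show ?thesis
    unfolding prod_neg_mult_power by simp
qed

definition index_box :: "nat \<Rightarrow> (nat \<Rightarrow> nat) \<Rightarrow> (nat \<Rightarrow> nat) set" where
  "index_box p m = Pi\<^sub>E {..<p} (\<lambda>i. {0..m i})"

lemma finite_index_box: "finite (index_box p m)"
  unfolding index_box_def by (intro finite_PiE) auto

lemma index_box_le: "x \<in> index_box p m \<Longrightarrow> i < p \<Longrightarrow> x i \<le> m i"
  unfolding index_box_def by (auto simp: PiE_iff)

definition box_term ::
    "complex \<Rightarrow> nat \<Rightarrow> (nat \<Rightarrow> complex) \<Rightarrow> (nat \<Rightarrow> nat) \<Rightarrow> complex \<Rightarrow> complex \<Rightarrow> (nat \<Rightarrow> nat) \<Rightarrow> complex" where
  "box_term q p c m b d x = vdm_quot q p c x * q ^ (\<Sum>i<p. x i)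
     * (\<Prod>i<p. qpoch q (c i / b) (x i) / (qpoch q (c i) (x i) * qpoch q (q * c i / d) (x i)))
     * cross_prod q p c m x"

definition box_prefactor :: "complex \<Rightarrow> nat \<Rightarrow> (nat \<Rightarrow> complex) \<Rightarrow> (nat \<Rightarrow> nat) \<Rightarrow> complex \<Rightarrow> complex" where
  "box_prefactor q p c m d = (\<Prod>i<p. qpoch q (inverse (q ^ m i) * d / c i) (m i))"

text \<open>The multiple sum \<open>R(a)\<close>; the factors depending on \<open>a\<close> are kept apart from \<open>box_term\<close>.\<close>

definition box_sum ::
    "complex \<Rightarrow> nat \<Rightarrow> (nat \<Rightarrow> complex) \<Rightarrow> (nat \<Rightarrow> nat) \<Rightarrow> complex \<Rightarrow> complex \<Rightarrow> complex \<Rightarrow> complex" where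
  "box_sum q p c m a b d = box_prefactor q p c m d
     * (\<Sum>x\<in>index_box p m. (\<Prod>i<p. qpoch q (c i / a) (x i)) * box_term q p c m b d x)"

definition box_sum_poly ::
    "complex \<Rightarrow> nat \<Rightarrow> (nat \<Rightarrow> complex) \<Rightarrow> (nat \<Rightarrow> nat) \<Rightarrow> complex \<Rightarrow> complex \<Rightarrow> complex poly" where
  "box_sum_poly q p c m b d = smult (box_prefactor q p c m d)
     (\<Sum>x\<in>index_box p m. smult (box_term q p c m b d x) (\<Prod>i<p. qpoch_poly q (c i) (x i)))"

lemma poly_box_sum_poly: "poly (box_sum_poly q p c m b d) (1 / a) = box_sum q p c m a b d"
  unfolding box_sum_poly_def box_sum_def poly_smult poly_sum poly_prod poly_qpoch_poly
  by (simp add: mult_ac)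

lemma degree_coeff_prod_qpoch_poly:
  fixes p :: nat and x :: "nat \<Rightarrow> nat"
  shows "degree (\<Prod>i<p. qpoch_poly q (c i) (x i)) \<le> (\<Sum>i<p. x i)
    \<and> coeff (\<Prod>i<p. qpoch_poly q (c i) (x i)) (\<Sum>i<p. x i) = (\<Prod>i<p. \<Prod>t<x i. - (c i * q ^ t))"
proof -
  have "degree (\<Prod>i<p. qpoch_poly q (c i) (x i)) \<le> (\<Sum>i<p. x i)
      \<and> coeff (\<Prod>i<p. qpoch_poly q (c i) (x i)) (\<Sum>i<p. x i) = (\<Prod>i<p. coeff (qpoch_poly q (c i) (x i)) (x i))"
    by (rule coeff_prod_degree_le) (simp_all add: degree_qpoch_poly)
  then show ?thesis
    by (simp add: coeff_qpoch_poly)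
qed

lemma degree_box_sum_poly: "degree (box_sum_poly q p c m b d) \<le> (\<Sum>i<p. m i)"
  unfolding box_sum_poly_def
proof (rule order_trans[OF degree_smult_le], rule degree_sum_le[OF finite_index_box])
  fix x
  assume x: "x \<in> index_box p m"
  have "degree (\<Prod>i<p. qpoch_poly q (c i) (x i)) \<le> (\<Sum>i<p. x i)"
    using degree_coeff_prod_qpoch_poly by blast
  also have "\<dots> \<le> (\<Sum>i<p. m i)"
    using index_box_le[OF x] by (intro sum_mono) auto
  finally show "degree (smult (box_term q p c m b d x) (\<Prod>i<p. qpoch_poly q (c i) (x i))) \<le> (\<Sum>i<p. m i)"
    using degree_smult_le order_trans by blast
qed

lemma box_term_cong:
  assumes "\<And>i. i < p \<Longrightarrow> x i = y i"
  shows "box_term q p c m b d x = box_term q p c m b d y"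
proof -
  have "vdm_quot q p c x = vdm_quot q p c y"
    unfolding vdm_quot_def using assms by (intro prod.cong refl) auto
  moreover have "cross_prod q p c m x = cross_prod q p c m y"
    unfolding cross_prod_def cross_factor_def using assms by (intro prod.cong refl) auto
  moreover have "(\<Sum>i<p. x i) = (\<Sum>i<p. y i)"
    using assms by (intro sum.cong) auto
  moreover have "(\<Prod>i<p. qpoch q (c i / b) (x i) / (qpoch q (c i) (x i) * qpoch q (q * c i / d) (x i)))
      = (\<Prod>i<p. qpoch q (c i / b) (y i) / (qpoch q (c i) (y i) * qpoch q (q * c i / d) (y i)))"
    using assms by (intro prod.cong) auto
  ultimately show ?thesis
    unfolding box_term_def by simp
qed

text \<open>Only the corner \<open>x = m\<close> of the box reaches the top degree.\<close>

lemma coeff_box_sum_poly: "coeff (box_sum_poly q p c m b d) (\<Sum>i<p. m i)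
    = box_prefactor q p c m d * box_term q p c m b d m * (\<Prod>i<p. \<Prod>t<m i. - (c i * q ^ t))"
proof -
  define M where "M = (\<Sum>i<p. m i)"
  define corner where "corner = restrict m {..<p}"
  define f where "f x = box_term q p c m b d x * coeff (\<Prod>i<p. qpoch_poly q (c i) (x i)) M" for x
  have corner: "corner \<in> index_box p m"
    unfolding corner_def index_box_def by (simp add: restrict_PiE_iff)
  have "f x = 0" if x: "x \<in> index_box p m - {corner}" for x
  proof -
    have "\<exists>i<p. x i \<noteq> m i"
    proof (rule ccontr)
      assume "\<not> (\<exists>i<p. x i \<noteq> m i)"
      moreover have "x \<in> extensional {..<p}"
        using x unfolding index_box_def by (auto simp: PiE_iff)
      ultimately have "x = corner"
        unfolding corner_def by (auto simp: fun_eq_iff extensional_def)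
      then show False
        using x by simp
    qed
    then obtain i where i: "i < p" "x i \<noteq> m i"
      by blast
    then have "(\<Sum>i<p. x i) < M"
      unfolding M_def using index_box_le[of x p m] x by (intro sum_strict_mono_ex1) (auto simp: le_less)
    then show ?thesis
      using degree_coeff_prod_qpoch_poly[where p = p and q = q and c = c and x = x] by (simp add: f_def coeff_eq_0)
  qed
  then have "(\<Sum>x\<in>index_box p m. f x) = f corner"
    using corner finite_index_box by (simp add: sum.remove)
  moreover have "f corner = box_term q p c m b d m * (\<Prod>i<p. \<Prod>t<m i. - (c i * q ^ t))"
  proof -
    have "box_term q p c m b d corner = box_term q p c m b d m"
      by (rule box_term_cong) (simp add: corner_def)
    moreover have "(\<Prod>i<p. qpoch_poly q (c i) (corner i)) = (\<Prod>i<p. qpoch_poly q (c i) (m i))"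
      by (intro prod.cong) (auto simp: corner_def)
    ultimately show ?thesis
      unfolding f_def M_def using degree_coeff_prod_qpoch_poly[where p = p and q = q and c = c and x = m] by simp
  qed
  ultimately show ?thesis
    unfolding box_sum_poly_def coeff_smult coeff_sum f_def M_def by simp
qed

lemma coeff_box_sum_poly_eq_coeff_newton_sum_poly:
  assumes q0: "q \<noteq> 0" and q1: "norm q < 1" and b0: "b \<noteq> 0" and d0: "d \<noteq> 0"
    and c0: "\<And>i. i < p \<Longrightarrow> c i \<noteq> 0"
    and cdist: "\<And>i k. i < p \<Longrightarrow> k < p \<Longrightarrow> i \<noteq> k \<Longrightarrow> c i \<noteq> c k"
    and qcc: "\<And>i k. i < p \<Longrightarrow> k < p \<Longrightarrow> qpoch q (q * c i / c k) (m i) \<noteq> 0"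
    and qcd: "\<And>i. i < p \<Longrightarrow> qpoch q (q * c i / d) (m i) \<noteq> 0"
  shows "coeff (box_sum_poly q p c m b d) (\<Sum>i<p. m i) = coeff (newton_sum_poly q p c m b d) (\<Sum>i<p. m i)"
proof -
  define M where "M = (\<Sum>i<p. m i)"
  define A where "A i = qpoch q (inverse (q ^ m i) * d / c i) (m i)" for i
  define B where "B i = qpoch q (c i / b) (m i)" for i
  define C where "C i = qpoch q (c i) (m i)" for i
  define D where "D i = qpoch q (q * c i / d) (m i)" for i
  define E where "E i = (\<Prod>t<m i. - (c i * q ^ t))" for i
  have "vdm_quot q p c m * cross_prod q p c m m = (-1) ^ M / qtri q (Suc M)"
    unfolding M_def by (rule vdm_quot_cross_prod_diagonal[OF q0 q1 c0 cdist qcc])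
  moreover have "(\<Prod>i<p. A i * E i / D i * (B i / C i)) = d ^ M / q ^ M * ((\<Prod>i<p. B i) / (\<Prod>i<p. C i))"
  proof -
    have "A i * E i / D i = d ^ m i / q ^ m i" if "i < p" for i
      unfolding A_def E_def D_def using top_coeff_box_factor[OF q0 c0[OF that] d0 qcd[OF that]] by simp
    then show ?thesis
      by (simp add: prod.distrib prod_dividef power_sum M_def)
  qed
  moreover have "coeff (box_sum_poly q p c m b d) M
      = q ^ M * (vdm_quot q p c m * cross_prod q p c m m) * (\<Prod>i<p. A i * E i / D i * (B i / C i))"
  proof -
    have "coeff (box_sum_poly q p c m b d) M
        = (\<Prod>i<p. A i) * (vdm_quot q p c m * q ^ M * (\<Prod>i<p. B i / (C i * D i)) * cross_prod q p c m m)
          * (\<Prod>i<p. E i)"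
      using coeff_box_sum_poly[of q p c m b d]
      unfolding M_def box_prefactor_def box_term_def A_def B_def C_def D_def E_def by simp
    also have "\<dots> = q ^ M * (vdm_quot q p c m * cross_prod q p c m m)
        * ((\<Prod>i<p. A i) * (\<Prod>i<p. B i / (C i * D i)) * (\<Prod>i<p. E i))"
      by (simp only: mult_ac)
    also have "(\<Prod>i<p. A i) * (\<Prod>i<p. B i / (C i * D i)) * (\<Prod>i<p. E i) = (\<Prod>i<p. A i * E i / D i * (B i / C i))"
      unfolding prod.distrib[symmetric] by (intro prod.cong refl) (simp add: divide_inverse inverse_mult_distrib mult_ac)
    finally show ?thesis .
  qed
  ultimately have "coeff (box_sum_poly q p c m b d) M
      = (-1) ^ M * d ^ M / qtri q (Suc M) * (\<Prod>i<p. B i) / (\<Prod>i<p. C i)"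
    using q0 by (simp add: field_simps)
  then show ?thesis
    unfolding coeff_newton_sum_poly[OF q0 b0] M_def B_def C_def .
qed

section \<open>Exchanging \<open>a\<close> with \<open>c\<^sub>j q^m\<^sub>j\<close>\<close>

lemma sum_fun_upd_lessThan:
  fixes m :: "nat \<Rightarrow> nat"
  assumes "j < p"
  shows "(\<Sum>i<p. (m(j := s)) i) + m j = (\<Sum>i<p. m i) + s"
proof -
  have "(\<Sum>i<p. (m(j := s)) i) = s + (\<Sum>i\<in>{..<p} - {j}. m i)"
    using assms by (simp add: sum.remove[of "{..<p}" j])
  moreover have "(\<Sum>i<p. m i) = m j + (\<Sum>i\<in>{..<p} - {j}. m i)"
    using assms by (simp add: sum.remove)
  ultimately show ?thesis
    by simp
qed

lemma cross_prod_swap: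
  assumes j: "j < p"
  shows "(\<Prod>i<p. qpoch q (c i / (c j * q ^ s)) (x i)) * cross_prod q p c m x
    = (\<Prod>i<p. qpoch q (c i / (c j * q ^ m j)) (x i)) * cross_prod q p c (m(j := s)) x"
proof -
  have "qpoch q (c i / (c j * q ^ s)) (x i) * (\<Prod>k<p. cross_factor q c m x i k)
      = qpoch q (c i / (c j * q ^ m j)) (x i) * (\<Prod>k<p. cross_factor q c (m(j := s)) x i k)" for i
  proof -
    have "(\<Prod>k\<in>{..<p} - {j}. cross_factor q c m x i k) = (\<Prod>k\<in>{..<p} - {j}. cross_factor q c (m(j := s)) x i k)"
      by (intro prod.cong) (auto simp: cross_factor_def)
    moreover have "c i / (c j * q ^ s) = inverse (q ^ s) * c i / c j"
      "c i / (c j * q ^ m j) = inverse (q ^ m j) * c i / c j"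
      by (simp_all add: field_simps)
    ultimately show ?thesis
      using j by (simp add: prod.remove[of "{..<p}" j] cross_factor_def mult_ac)
  qed
  then show ?thesis
    unfolding cross_prod_def prod.distrib[symmetric] by simp
qed

lemma box_prefactor_swap:
  assumes q0: "q \<noteq> 0" and j: "j < p" and s: "s < m j"
  shows "box_prefactor q p c m d
    = qpoch q (inverse (q ^ m j) * d / c j) (m j - s) * box_prefactor q p c (m(j := s)) d"
proof -
  have e: "inverse (q ^ m j) * d / c j * q ^ (m j - s) = inverse (q ^ s) * d / c j"
    using q0 s by (simp add: field_simps power_diff)
  have "qpoch q (inverse (q ^ m j) * d / c j) (m j)
      = qpoch q (inverse (q ^ m j) * d / c j) (m j - s) * qpoch q (inverse (q ^ s) * d / c j) s"
    using qpoch_add[of q "inverse (q ^ m j) * d / c j" "m j - s" s] s unfolding e by simp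
  moreover have "(\<Prod>i\<in>{..<p} - {j}. qpoch q (inverse (q ^ m i) * d / c i) (m i))
      = (\<Prod>i\<in>{..<p} - {j}. qpoch q (inverse (q ^ (m(j := s)) i) * d / c i) ((m(j := s)) i))"
    by (intro prod.cong) auto
  ultimately show ?thesis
    unfolding box_prefactor_def using j by (simp add: prod.remove[of "{..<p}" j] mult_ac)
qed

lemma index_box_fun_upd_subset:
  assumes "s \<le> m j"
  shows "index_box p (m(j := s)) \<subseteq> index_box p m"
proof
  fix x
  assume "x \<in> index_box p (m(j := s))"
  then have "x \<in> extensional {..<p}" "\<And>i. i < p \<Longrightarrow> x i \<le> (m(j := s)) i"
    unfolding index_box_def by (auto simp: PiE_iff)
  moreover have "(m(j := s)) i \<le> m i" for i
    using assms by simp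
  ultimately show "x \<in> index_box p m"
    unfolding index_box_def PiE_iff using le_trans by fastforce
qed

lemma box_sum_swap:
  assumes q0: "q \<noteq> 0" and j: "j < p" and s: "s < m j" and cj: "c j \<noteq> 0"
  shows "box_sum q p c m (c j * q ^ s) b d
    = qpoch q (inverse (q ^ m j) * d / c j) (m j - s) * box_sum q p c (m(j := s)) (c j * q ^ m j) b d"
proof -
  define m' where "m' = m(j := s)"
  have vanish: "(\<Prod>i<p. qpoch q (c i / (c j * q ^ s)) (x i)) = 0" if x: "x \<in> index_box p m - index_box p m'" for x
  proof -
    have "s < x j"
    proof (rule ccontr)
      assume "\<not> s < x j"
      then have "x \<in> index_box p m'"
        using x unfolding index_box_def m'_def by (auto simp: PiE_iff)
      then show False
        using x by simp
    qed
    moreover have "c j / (c j * q ^ s) * q ^ s = 1"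
      using q0 cj by simp
    ultimately have "qpoch q (c j / (c j * q ^ s)) (x j) = 0"
      unfolding qpoch_eq_0_iff by blast
    then show ?thesis
      using j by (simp add: prod.remove[of "{..<p}" j])
  qed
  have "(\<Sum>x\<in>index_box p m. (\<Prod>i<p. qpoch q (c i / (c j * q ^ s)) (x i)) * box_term q p c m b d x)
      = (\<Sum>x\<in>index_box p m'. (\<Prod>i<p. qpoch q (c i / (c j * q ^ s)) (x i)) * box_term q p c m b d x)"
  proof (rule sum.mono_neutral_right[OF finite_index_box])
    show "index_box p m' \<subseteq> index_box p m"
      unfolding m'_def using s by (intro index_box_fun_upd_subset) simp
  qed (simp add: vanish)
  also have "\<dots> = (\<Sum>x\<in>index_box p m'. (\<Prod>i<p. qpoch q (c i / (c j * q ^ m j)) (x i)) * box_term q p c m' b d x)"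
  proof (intro sum.cong refl)
    fix x
    show "(\<Prod>i<p. qpoch q (c i / (c j * q ^ s)) (x i)) * box_term q p c m b d x
        = (\<Prod>i<p. qpoch q (c i / (c j * q ^ m j)) (x i)) * box_term q p c m' b d x"
      unfolding box_term_def m'_def using cross_prod_swap[OF j, of q c s x m] by (simp add: mult_ac)
  qed
  finally have sum_eq: "(\<Sum>x\<in>index_box p m. (\<Prod>i<p. qpoch q (c i / (c j * q ^ s)) (x i)) * box_term q p c m b d x)
      = (\<Sum>x\<in>index_box p m'. (\<Prod>i<p. qpoch q (c i / (c j * q ^ m j)) (x i)) * box_term q p c m' b d x)" .
  show ?thesis
    unfolding box_sum_def box_prefactor_swap[where m = m and c = c, OF q0 j s] m'_def[symmetric] sum_eq
    by (simp only: mult_ac)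
qed

lemma swap_argument_eq:
  fixes m :: "nat \<Rightarrow> nat" and c :: "nat \<Rightarrow> complex"
  assumes q0: "q \<noteq> 0" and j: "j < p" and cj: "c j \<noteq> 0"
  shows "d * inverse (q ^ (\<Sum>i<p. m i)) / (c j * q ^ s * b)
    = d * inverse (q ^ (\<Sum>i<p. (m(j := s)) i)) / (c j * q ^ m j * b)"
proof -
  have "q ^ (\<Sum>i<p. (m(j := s)) i) * q ^ m j = q ^ (\<Sum>i<p. m i) * q ^ s"
    unfolding power_add[symmetric] sum_fun_upd_lessThan[OF j] ..
  then show ?thesis
    using q0 cj by (simp add: field_simps)
qed

lemma series_term_swap:
  assumes q0: "q \<noteq> 0" and j: "j < p" and cj: "c j \<noteq> 0"
  shows "series_term q p c m (c j * q ^ s) b d = series_term q p c (m(j := s)) (c j * q ^ m j) b d"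
proof
  fix y
  define m' where "m' = m(j := s)"
  have "(\<Prod>i\<in>{..<p} - {j}. qpoch q (c i * q ^ m i) y / qpoch q (c i) y)
      = (\<Prod>i\<in>{..<p} - {j}. qpoch q (c i * q ^ m' i) y / qpoch q (c i) y)"
    by (intro prod.cong) (auto simp: m'_def)
  then have prod: "qpoch q (c j * q ^ s) y * (\<Prod>i<p. qpoch q (c i * q ^ m i) y / qpoch q (c i) y)
      = qpoch q (c j * q ^ m j) y * (\<Prod>i<p. qpoch q (c i * q ^ m' i) y / qpoch q (c i) y)"
    using j by (simp add: prod.remove[of "{..<p}" j] m'_def mult_ac)
  show "series_term q p c m (c j * q ^ s) b d y = series_term q p c m' (c j * q ^ m j) b d y"
    unfolding series_term_def swap_argument_eq[where c = c and m = m, OF q0 j cj] m'_def[symmetric] using prod by (simp add: mult_ac)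
qed

lemma gauss_factor_nonzero:
  assumes "q \<noteq> 0" "norm q < 1" "norm (d / a) < 1" "norm (d / b) < 1" "norm d < 1"
    and "norm (d * inverse (q ^ M) / (a * b)) < 1"
  shows "gauss_factor q M a b d \<noteq> 0"
  unfolding gauss_factor_def using qpoch_inf_nonzero_small[OF assms(1,2)] assms by simp

lemma gauss_factor_swap:
  fixes m :: "nat \<Rightarrow> nat" and c :: "nat \<Rightarrow> complex"
  assumes q0: "q \<noteq> 0" and q1: "norm q < 1" and j: "j < p" and s: "s < m j" and cj: "c j \<noteq> 0"
  shows "gauss_factor q (\<Sum>i<p. (m(j := s)) i) (c j * q ^ m j) b d
    = qpoch q (inverse (q ^ m j) * d / c j) (m j - s) * gauss_factor q (\<Sum>i<p. m i) (c j * q ^ s) b d"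
proof -
  have "qpoch_inf q (d / (c j * q ^ m j))
      = qpoch q (d / (c j * q ^ m j)) (m j - s) * qpoch_inf q (d / (c j * q ^ m j) * q ^ (m j - s))"
    by (rule qpoch_inf_split[OF q0 q1])
  moreover have "d / (c j * q ^ m j) * q ^ (m j - s) = d / (c j * q ^ s)"
    using q0 cj s by (simp add: field_simps power_diff)
  moreover have "d / (c j * q ^ m j) = inverse (q ^ m j) * d / c j"
    by (simp add: field_simps)
  ultimately show ?thesis
    unfolding gauss_factor_def swap_argument_eq[where c = c and m = m, OF q0 j cj, symmetric] by (simp add: mult_ac)
qed

lemma newton_sum_swap_convergent:
  assumes q0: "q \<noteq> 0" and q1: "norm q < 1" and j: "j < p" and s: "s < m j"
    and c0: "\<And>i. i < p \<Longrightarrow> c i \<noteq> 0" and c: "\<And>i y. i < p \<Longrightarrow> qpoch q (c i) y \<noteq> 0"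
    and b0: "b \<noteq> 0" and d1: "norm d < 1" and da: "norm (d / (c j * q ^ s)) < 1" and db: "norm (d / b) < 1"
    and conv: "norm (d * inverse (q ^ (\<Sum>i<p. m i)) / (c j * q ^ s * b)) < 1"
  shows "newton_sum q p c m (c j * q ^ s) b d
    = qpoch q (inverse (q ^ m j) * d / c j) (m j - s) * newton_sum q p c (m(j := s)) (c j * q ^ m j) b d"
proof -
  define a where "a = c j * q ^ s"
  define a' where "a' = c j * q ^ m j"
  define m' where "m' = m(j := s)"
  have cj: "c j \<noteq> 0"
    using c0 j by auto
  then have a0: "a \<noteq> 0" and a'0: "a' \<noteq> 0"
    using q0 by (simp_all add: a_def a'_def)
  have d: "qpoch q d n \<noteq> 0" for n
    using qpoch_nonzero_small[OF q0 q1 d1] .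
  have conv': "norm (d * inverse (q ^ (\<Sum>i<p. m' i)) / (a' * b)) < 1"
    using conv unfolding a_def a'_def m'_def swap_argument_eq[where c = c and m = m, OF q0 j cj] .
  have "series_term q p c m a b d sums (gauss_factor q (\<Sum>i<p. m i) a b d * newton_sum q p c m a b d)"
    using series_term_sums[where p = p and c = c and m = m, OF q0 q1 a0 b0 d c] conv by (simp add: a_def)
  moreover have "series_term q p c m' a' b d sums (gauss_factor q (\<Sum>i<p. m' i) a' b d * newton_sum q p c m' a' b d)"
    using series_term_sums[where p = p and c = c and m = m', OF q0 q1 a'0 b0 d c] conv' by simp
  moreover have "series_term q p c m a b d = series_term q p c m' a' b d"
    unfolding a_def a'_def m'_def by (rule series_term_swap[where c = c, OF q0 j cj])
  ultimately have "gauss_factor q (\<Sum>i<p. m i) a b d * newton_sum q p c m a b d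
      = gauss_factor q (\<Sum>i<p. m' i) a' b d * newton_sum q p c m' a' b d"
    using sums_unique2 by metis
  moreover have "gauss_factor q (\<Sum>i<p. m i) a b d \<noteq> 0"
    using gauss_factor_nonzero[OF q0 q1] da db d1 conv by (simp add: a_def)
  ultimately show ?thesis
    unfolding a_def a'_def m'_def gauss_factor_swap[where c = c and m = m, OF q0 q1 j s cj] by (simp add: mult_ac)
qed

lemma poly_eq_if_eq_near_0:
  fixes P Q :: "complex poly"
  assumes "\<delta> > 0" and eq: "\<And>d. 0 < norm d \<Longrightarrow> norm d < \<delta> \<Longrightarrow> poly P d = poly Q d"
  shows "P = Q"
proof (rule ccontr)
  assume "P \<noteq> Q"
  then have "finite {x. poly (P - Q) x = 0}"
    by (intro poly_roots_finite) simp
  moreover define f where "f n = complex_of_real (\<delta> / (real n + 2))" for n :: nat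
  have "range f \<subseteq> {x. poly (P - Q) x = 0}"
  proof
    fix z
    assume "z \<in> range f"
    then obtain n where z: "z = f n"
      by auto
    have "\<delta> / (real n + 2) \<le> \<delta> / 2"
      using assms(1) by (intro divide_left_mono) auto
    moreover have "norm z = \<delta> / (real n + 2)"
      unfolding z f_def norm_of_real using assms(1) by simp
    moreover have "0 < \<delta> / (real n + 2)"
      using assms(1) by simp
    ultimately have "0 < norm z" "norm z < \<delta>"
      by linarith+
    then show "z \<in> {x. poly (P - Q) x = 0}"
      using eq[of z] by simp
  qed
  moreover have "inj f"
    using assms(1) by (intro injI) (auto simp: f_def field_simps)
  ultimately show False
    using finite_subset infinite_UNIV_nat by (metis finite_imageD)
qed

definition newton_sum_poly_in_d ::
    "complex \<Rightarrow> nat \<Rightarrow> (nat \<Rightarrow> complex) \<Rightarrow> (nat \<Rightarrow> nat) \<Rightarrow> complex \<Rightarrow> complex \<Rightarrow> complex poly" where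
  "newton_sum_poly_in_d q p c m a b = (\<Sum>k\<le>(\<Sum>i<p. m i).
     smult (ratio_coeff q p c m k * (qpoch q a k * qpoch q b k * (1 / (a * b)) ^ k * ((-1) ^ k * qtri q k / q ^ (k * k))))
       (monom 1 k * qpoch_poly q (inverse (q ^ (\<Sum>i<p. m i)) / (a * b)) ((\<Sum>i<p. m i) - k)))"

lemma poly_newton_sum_poly_in_d: "poly (newton_sum_poly_in_d q p c m a b) d = newton_sum q p c m a b d"
  unfolding newton_sum_poly_in_d_def newton_sum_def newton_weight_def poly_sum
  by (intro sum.cong refl) (simp add: poly_monom poly_qpoch_poly power_divide mult_ac)

lemma newton_sum_swap:
  assumes q0: "q \<noteq> 0" and q1: "norm q < 1" and j: "j < p" and s: "s < m j"
    and c0: "\<And>i. i < p \<Longrightarrow> c i \<noteq> 0" and c: "\<And>i y. i < p \<Longrightarrow> qpoch q (c i) y \<noteq> 0"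
    and b0: "b \<noteq> 0"
  shows "newton_sum q p c m (c j * q ^ s) b d
    = qpoch q (inverse (q ^ m j) * d / c j) (m j - s) * newton_sum q p c (m(j := s)) (c j * q ^ m j) b d"
proof -
  define a where "a = c j * q ^ s"
  define M where "M = (\<Sum>i<p. m i)"
  define \<delta> where "\<delta> = min 1 (min (norm a) (min (norm b) (norm q ^ M * norm a * norm b)))"
  have a0: "a \<noteq> 0"
    using c0 j q0 by (simp add: a_def)
  have "newton_sum_poly_in_d q p c m a b
      = qpoch_poly q (inverse (q ^ m j) / c j) (m j - s) * newton_sum_poly_in_d q p c (m(j := s)) (c j * q ^ m j) b"
  proof (rule poly_eq_if_eq_near_0)
    show "\<delta> > 0"
      using a0 b0 q0 by (simp add: \<delta>_def)
    fix d :: complex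
    assume "0 < norm d" "norm d < \<delta>"
    then have "norm d < 1" "norm d < norm a" "norm d < norm b" "norm d < norm q ^ M * norm a * norm b"
      by (simp_all add: \<delta>_def)
    then have "norm (d / a) < 1" "norm (d / b) < 1" "norm (d * inverse (q ^ M) / (a * b)) < 1"
      using a0 b0 q0 by (simp_all add: norm_divide norm_mult norm_inverse norm_power divide_less_eq field_simps)
    then show "poly (newton_sum_poly_in_d q p c m a b) d
      = poly (qpoch_poly q (inverse (q ^ m j) / c j) (m j - s) * newton_sum_poly_in_d q p c (m(j := s)) (c j * q ^ m j) b) d"
      unfolding poly_mult poly_newton_sum_poly_in_d poly_qpoch_poly a_def M_def
      using newton_sum_swap_convergent[where m = m and c = c, OF q0 q1 j s c0 c b0 \<open>norm d < 1\<close>] by (simp add: field_simps)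
  qed
  then have "poly (newton_sum_poly_in_d q p c m a b) d
      = poly (qpoch_poly q (inverse (q ^ m j) / c j) (m j - s) * newton_sum_poly_in_d q p c (m(j := s)) (c j * q ^ m j) b) d"
    by simp
  then show ?thesis
    unfolding poly_mult poly_newton_sum_poly_in_d poly_qpoch_poly a_def by (simp add: field_simps)
qed

section \<open>Interpolation\<close>

lemma interpolation_points_distinct:
  assumes q0: "q \<noteq> 0" and q1: "norm q < 1" and i: "i < p" and j: "j < p" and ci: "c i \<noteq> 0"
    and qcc: "\<And>x. x \<le> m i \<Longrightarrow> qpoch q (q * c i / c j) x \<noteq> 0"
    and eq: "c j * q ^ s = c i * q ^ t" and st: "s < t" and tm: "t < m i"
  shows False
proof -
  define l where "l = t - s"
  have "l > 0" "l \<le> m i"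
    using st tm by (simp_all add: l_def)
  have "q ^ t = q ^ s * q ^ l"
    using st by (simp add: l_def power_add[symmetric])
  then have cj: "c j = c i * q ^ l"
    using eq q0 by (simp add: field_simps)
  show False
  proof (cases "i = j")
    case True
    then have "q ^ l = 1"
      using cj ci by simp
    then show False
      using power_q_neq_1[OF q0 q1 \<open>l > 0\<close>] by simp
  next
    case False
    have "q * c i / c j * q ^ (l - 1) = 1"
      unfolding cj using ci q0 \<open>l > 0\<close> by (simp add: field_simps power_Suc[symmetric])
    then have "qpoch q (q * c i / c j) l = 0"
      unfolding qpoch_eq_0_iff using \<open>l > 0\<close> by (intro exI[of _ "l - 1"]) simp
    then show False
      using qcc[OF \<open>l \<le> m i\<close>] by blast
  qed
qed

lemma inj_on_interpolation_points:
  assumes q0: "q \<noteq> 0" and q1: "norm q < 1"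
    and c0: "\<And>i. i < p \<Longrightarrow> c i \<noteq> 0"
    and cdist: "\<And>i k. i < p \<Longrightarrow> k < p \<Longrightarrow> i \<noteq> k \<Longrightarrow> c i \<noteq> c k"
    and qcc: "\<And>i k x. i < p \<Longrightarrow> k < p \<Longrightarrow> x \<le> m i \<Longrightarrow> qpoch q (q * c i / c k) x \<noteq> 0"
  shows "inj_on (\<lambda>(j, s). 1 / (c j * q ^ s)) (SIGMA j:{..<p}. {..<m j})"
proof (rule inj_onI, clarify)
  fix j s i t
  assume j: "j < p" and s: "s < m j" and i: "i < p" and t: "t < m i"
    and "1 / (c j * q ^ s) = 1 / (c i * q ^ t)"
  then have e: "c j * q ^ s = c i * q ^ t"
    using c0[OF i] c0[OF j] q0 by (simp add: field_simps)
  show "j = i \<and> s = t"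
  proof (cases s t rule: linorder_cases)
    case less
    then show ?thesis
      using interpolation_points_distinct[where c = c and m = m, OF q0 q1 i j c0[OF i] qcc[OF i j] e less t] by simp
  next
    case equal
    then show ?thesis
      using e q0 cdist[OF j i] by auto
  next
    case greater
    then show ?thesis
      using interpolation_points_distinct[where c = c and m = m, OF q0 q1 j i c0[OF j] qcc[OF j i] e[symmetric] greater s] by simp
  qed
qed

lemma newton_sum_poly_eq_box_sum_poly_at_node:
  assumes q0: "q \<noteq> 0" and q1: "norm q < 1" and j: "j < p" and s: "s < m j"
    and c0: "\<And>i. i < p \<Longrightarrow> c i \<noteq> 0" and c: "\<And>i y. i < p \<Longrightarrow> qpoch q (c i) y \<noteq> 0" and b0: "b \<noteq> 0"
    and smaller: "newton_sum q p c (m(j := s)) (c j * q ^ m j) b d = box_sum q p c (m(j := s)) (c j * q ^ m j) b d"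
  shows "poly (newton_sum_poly q p c m b d) (1 / (c j * q ^ s)) = poly (box_sum_poly q p c m b d) (1 / (c j * q ^ s))"
proof -
  have "c j * q ^ s \<noteq> 0"
    using c0[OF j] q0 by simp
  then have "poly (newton_sum_poly q p c m b d) (1 / (c j * q ^ s)) = newton_sum q p c m (c j * q ^ s) b d"
    using b0 by (rule poly_newton_sum_poly)
  also have "\<dots> = qpoch q (inverse (q ^ m j) * d / c j) (m j - s) * newton_sum q p c (m(j := s)) (c j * q ^ m j) b d"
    by (rule newton_sum_swap[where m = m and c = c, OF q0 q1 j s c0 c b0])
  also have "\<dots> = box_sum q p c m (c j * q ^ s) b d"
    unfolding smaller by (rule box_sum_swap[where m = m and c = c, OF q0 j s c0[OF j], symmetric])
  finally show ?thesis
    unfolding poly_box_sum_poly .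
qed

theorem newton_sum_eq_box_sum:
  assumes q0: "q \<noteq> 0" and q1: "norm q < 1" and d0: "d \<noteq> 0"
    and c0: "\<And>i. i < p \<Longrightarrow> c i \<noteq> 0"
    and cdist: "\<And>i k. i < p \<Longrightarrow> k < p \<Longrightarrow> i \<noteq> k \<Longrightarrow> c i \<noteq> c k"
    and c: "\<And>i y. i < p \<Longrightarrow> qpoch q (c i) y \<noteq> 0"
    and "\<And>i x. i < p \<Longrightarrow> x \<le> m i \<Longrightarrow> qpoch q (q * c i / d) x \<noteq> 0"
    and "\<And>i k x. i < p \<Longrightarrow> k < p \<Longrightarrow> x \<le> m i \<Longrightarrow> qpoch q (q * c i / c k) x \<noteq> 0"
    and "a \<noteq> 0" "b \<noteq> 0"
  shows "newton_sum q p c m a b d = box_sum q p c m a b d"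
  using assms(7-)
proof (induction "\<Sum>i<p. m i" arbitrary: m a b rule: less_induct)
  case less
  note qcd = less.prems(1) and qcc = less.prems(2) and a0 = less.prems(3) and b0 = less.prems(4)
  define S where "S = (\<lambda>(j, s). 1 / (c j * q ^ s)) ` (SIGMA j:{..<p}. {..<m j})"
  have "card S = (\<Sum>i<p. m i)"
    unfolding S_def
    using card_image[OF inj_on_interpolation_points[where p = p and c = c and m = m, OF q0 q1 c0 cdist qcc]] by simp
  moreover have "poly (newton_sum_poly q p c m b d) z = poly (box_sum_poly q p c m b d) z" if "z \<in> S" for z
  proof -
    obtain j s where j: "j < p" and s: "s < m j" and z: "z = 1 / (c j * q ^ s)"
      using \<open>z \<in> S\<close> unfolding S_def by auto
    have le: "(m(j := s)) i \<le> m i" for i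
      using s by simp
    have smaller: "newton_sum q p c (m(j := s)) (c j * q ^ m j) b d = box_sum q p c (m(j := s)) (c j * q ^ m j) b d"
    proof (rule less.hyps)
      show "(\<Sum>i<p. (m(j := s)) i) < (\<Sum>i<p. m i)"
        using sum_fun_upd_lessThan[OF j, of m s] s by simp
      show "\<And>i x. i < p \<Longrightarrow> x \<le> (m(j := s)) i \<Longrightarrow> qpoch q (q * c i / d) x \<noteq> 0"
        using qcd le order_trans by blast
      show "\<And>i k x. i < p \<Longrightarrow> k < p \<Longrightarrow> x \<le> (m(j := s)) i \<Longrightarrow> qpoch q (q * c i / c k) x \<noteq> 0"
        using qcc le order_trans by blast
      show "c j * q ^ m j \<noteq> 0"
        using c0[OF j] q0 by simp
    qed (rule b0)
    show ?thesis
      unfolding z by (rule newton_sum_poly_eq_box_sum_poly_at_node[where m = m and c = c, OF q0 q1 j s c0 c b0 smaller])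
  qed
  moreover have "coeff (newton_sum_poly q p c m b d) (\<Sum>i<p. m i) = coeff (box_sum_poly q p c m b d) (\<Sum>i<p. m i)"
    using coeff_box_sum_poly_eq_coeff_newton_sum_poly[OF q0 q1 b0 d0 c0 cdist] qcd qcc by simp
  ultimately have "newton_sum_poly q p c m b d = box_sum_poly q p c m b d"
    using degree_newton_sum_poly degree_box_sum_poly
    by (intro poly_eqI_degree_lead_coeff[where n = "\<Sum>i<p. m i" and A = S]) auto
  then show ?case
    using poly_newton_sum_poly[OF a0 b0] poly_box_sum_poly by metis
qed

lemma box_sum_expanded:
  "box_sum q p c m a b d = (\<Prod>i<p. qpoch q (inverse (q ^ m i) * d / c i) (m i))
    * (\<Sum>x\<in>Pi\<^sub>E {..<p} (\<lambda>i. {0..m i}). vdm_quot q p c x * q ^ (\<Sum>i<p. x i)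
        * (\<Prod>i<p. qpoch q (c i / a) (x i) * qpoch q (c i / b) (x i) / (qpoch q (c i) (x i) * qpoch q (q * c i / d) (x i)))
        * (\<Prod>i<p. \<Prod>k<p. qpoch q (inverse (q ^ m k) * c i / c k) (x i) / qpoch q (q * c i / c k) (x i)))"
  unfolding box_sum_def box_prefactor_def index_box_def
proof (rule arg_cong2[where f = "(*)"], rule refl, rule sum.cong, rule refl)
  fix x :: "nat \<Rightarrow> nat"
  have "(\<Prod>i<p. qpoch q (c i / a) (x i) * qpoch q (c i / b) (x i) / (qpoch q (c i) (x i) * qpoch q (q * c i / d) (x i)))
      = (\<Prod>i<p. qpoch q (c i / a) (x i))
        * (\<Prod>i<p. qpoch q (c i / b) (x i) / (qpoch q (c i) (x i) * qpoch q (q * c i / d) (x i)))"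
    unfolding prod.distrib[symmetric] by (simp add: mult.assoc)
  then show "(\<Prod>i<p. qpoch q (c i / a) (x i)) * box_term q p c m b d x = vdm_quot q p c x * q ^ (\<Sum>i<p. x i)
      * (\<Prod>i<p. qpoch q (c i / a) (x i) * qpoch q (c i / b) (x i) / (qpoch q (c i) (x i) * qpoch q (q * c i / d) (x i)))
      * (\<Prod>i<p. \<Prod>k<p. qpoch q (inverse (q ^ m k) * c i / c k) (x i) / qpoch q (q * c i / c k) (x i))"
    unfolding box_term_def cross_prod_def cross_factor_def by (simp only: mult_ac)
qed

theorem corollary4p14:
  fixes q a b d :: complex and p :: nat and c :: "nat \<Rightarrow> complex" and m :: "nat \<Rightarrow> nat"
  defines "M \<equiv> (\<Sum>i<p. m i)"
  assumes q: "0 < norm q" "norm q < 1"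
    and nz: "a \<noteq> 0" "b \<noteq> 0" "d \<noteq> 0" "\<And>i. i < p \<Longrightarrow> c i \<noteq> 0"
    and cdist: "\<And>i j. i < p \<Longrightarrow> j < p \<Longrightarrow> i \<noteq> j \<Longrightarrow> c i \<noteq> c j"
    and dn1: "\<And>y. qpoch q d y \<noteq> 0"
    and dn2: "\<And>i y. i < p \<Longrightarrow> qpoch q (c i) y \<noteq> 0"
    and dn3: "qpoch_inf q d \<noteq> 0"
    and dn4: "qpoch_inf q (q powi (- int M) * d / (a * b)) \<noteq> 0"
    and dn5: "\<And>i x. i < p \<Longrightarrow> x \<le> m i \<Longrightarrow> qpoch q (q * c i / d) x \<noteq> 0"
    and dn6: "\<And>i k x. i < p \<Longrightarrow> k < p \<Longrightarrow> x \<le> m i \<Longrightarrow> qpoch q (q * c i / c k) x \<noteq> 0"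
    and conv: "norm (d * q powi (- int M) / (a * b)) < 1"
  shows "(\<lambda>y. qpoch q a y * qpoch q b y / (qpoch q q y * qpoch q d y)
            * (\<Prod>i<p. qpoch q (c i * q ^ m i) y / qpoch q (c i) y)
            * (d * q powi (- int M) / (a * b)) ^ y)
    sums (qpoch_inf q (d / a) * qpoch_inf q (d / b)
            / (qpoch_inf q d * qpoch_inf q (q powi (- int M) * d / (a * b)))
          * (\<Prod>i<p. qpoch q (q powi (- int (m i)) * d / c i) (m i))
          * (\<Sum>x\<in>Pi\<^sub>E {..<p} (\<lambda>i. {0..m i}).
               vdm_quot q p c x * q ^ (\<Sum>i<p. x i)
               * (\<Prod>i<p. qpoch q (c i / a) (x i) * qpoch q (c i / b) (x i)
                    / (qpoch q (c i) (x i) * qpoch q (q * c i / d) (x i)))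
               * (\<Prod>i<p. \<Prod>k<p. qpoch q (q powi (- int (m k)) * c i / c k) (x i)
                    / qpoch q (q * c i / c k) (x i))))"
proof -
  have q0: "q \<noteq> 0" and q1: "norm q < 1"
    using q by auto
  have powi: "q powi (- int n) = inverse (q ^ n)" for n
    by (simp add: power_int_minus)
  have "norm (d * inverse (q ^ (\<Sum>i<p. m i)) / (a * b)) < 1"
    using conv unfolding powi M_def .
  then have "series_term q p c m a b d sums (gauss_factor q M a b d * box_sum q p c m a b d)"
    using series_term_sums[where p = p and c = c and m = m, OF q0 q1 nz(1,2) dn1 dn2] newton_sum_eq_box_sum[where p = p and c = c and m = m, OF q0 q1 nz(3,4) cdist dn2 dn5 dn6 nz(1,2)] by (simp add: M_def)
  moreover have "inverse (q ^ M) * d / (a * b) = d * inverse (q ^ M) / (a * b)"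
    by simp
  ultimately show ?thesis
    unfolding series_term_def gauss_factor_def box_sum_expanded powi M_def[symmetric] by (simp only: mult.assoc)
qed

end
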